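(* If $(f_n)$ is a sequence of finitary Boolean functions with $\delta_{f_n}\to0$, then $(f_n)$ is noise sensitive.
   Context: Let $\Omega=\{-1,1\}$ and $\Omega^\infty=\{-1,1\}^{\mathbb N}$ with the uniform product probability measure; $\omega$ denotes a uniformly random element. A Boolean function is a measurable map $f:\Omega^\infty\to\Omega$. A set $W\subseteq\mathbb N$ is a witness set for $f$ at $\omega$ if there is an event $A$ with $\mathbb P(A)=1$ such that for all $\tilde\omega\in A$: if $\tilde\omega_i=\omega_i$ for all $i\in W$ then $f(\tilde\omega)=f(\omega)$. $f$ is finitary if almost surely a finite witness set exists. A (randomised) algorithm $A$ for a finitary $f$ queries bits of $\omega$ one at a time, each next index chosen as a function of the bits queried so far and independent auxiliary randomness, and stops once the set of queried bits is a witness set for $f$ at $\omega$; it must query almost surely only finitely many bits. $W(A)$ is the set of queried bits. The revealment of $f$ is $\delta_f=\inf_A\sup_i\mathbb P(i\in W(A))$ over all such algorithms. For $\epsilon\in[0,1]$, $\omega^\epsilon$ is obtained from $\omega$ by, independently for each coordinate, with probability $\epsilon$ replacing $\omega_i$ by a fresh uniform bit. A sequence $(f_n)$ is noise sensitive if for every $\epsilon\in(0,1]$, $\mathbb E[f_n(\omega)f_n(\omega^\epsilon)]-\mathbb E[f_n(\omega)]^2\to0$. *)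

theory Defs
  imports "HOL-Probability.Probability"
begin

definition coin :: "real measure" where
  "coin = measure_pmf (pmf_of_set {-1, 1})"

definition Cube :: "(nat \<Rightarrow> real) measure" where
  "Cube = PiM UNIV (\<lambda>_. coin)"

definition boolean_fun :: "((nat \<Rightarrow> real) \<Rightarrow> real) \<Rightarrow> bool" where
  "boolean_fun f \<longleftrightarrow> f \<in> borel_measurable Cube \<and> (\<forall>\<omega>\<in>space Cube. f \<omega> \<in> {-1, 1})"

definition witness :: "((nat \<Rightarrow> real) \<Rightarrow> real) \<Rightarrow> nat set \<Rightarrow> (nat \<Rightarrow> real) \<Rightarrow> bool" where
  "witness f W \<omega> \<longleftrightarrow>
     (\<exists>A\<in>sets Cube. measure Cube A = 1 \<and>
        (\<forall>\<omega>'\<in>A. (\<forall>i\<in>W. \<omega>' i = \<omega> i) \<longrightarrow> f \<omega>' = f \<omega>))"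

definition finitary :: "((nat \<Rightarrow> real) \<Rightarrow> real) \<Rightarrow> bool" where
  "finitary f \<longleftrightarrow> (AE \<omega> in Cube. \<exists>W. finite W \<and> witness f W \<omega>)"

text \<open>A query rule q: given the auxiliary randomness rho (an independent uniform
  element of {-1,1}^N) and the history of queried (index, value) pairs,
  returns the next index to query.\<close>

fun hist :: "((nat \<Rightarrow> real) \<Rightarrow> (nat \<times> real) list \<Rightarrow> nat) \<Rightarrow> (nat \<Rightarrow> real) \<Rightarrow> (nat \<Rightarrow> real)
              \<Rightarrow> nat \<Rightarrow> (nat \<times> real) list" where
  "hist q \<rho> \<omega> 0 = []"
| "hist q \<rho> \<omega> (Suc k) = hist q \<rho> \<omega> k @ [(q \<rho> (hist q \<rho> \<omega> k), \<omega> (q \<rho> (hist q \<rho> \<omega> k)))]"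

definition queried :: "((nat \<Rightarrow> real) \<Rightarrow> (nat \<times> real) list \<Rightarrow> nat) \<Rightarrow> (nat \<Rightarrow> real) \<Rightarrow> (nat \<Rightarrow> real)
              \<Rightarrow> nat \<Rightarrow> nat set" where
  "queried q \<rho> \<omega> k = fst ` set (hist q \<rho> \<omega> k)"

definition stop_time :: "((nat \<Rightarrow> real) \<Rightarrow> real) \<Rightarrow> ((nat \<Rightarrow> real) \<Rightarrow> (nat \<times> real) list \<Rightarrow> nat)
              \<Rightarrow> (nat \<Rightarrow> real) \<Rightarrow> (nat \<Rightarrow> real) \<Rightarrow> nat" where
  "stop_time f q \<omega> \<rho> = (LEAST k. witness f (queried q \<rho> \<omega> k) \<omega>)"

definition alg_W :: "((nat \<Rightarrow> real) \<Rightarrow> real) \<Rightarrow> ((nat \<Rightarrow> real) \<Rightarrow> (nat \<times> real) list \<Rightarrow> nat)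
              \<Rightarrow> (nat \<Rightarrow> real) \<Rightarrow> (nat \<Rightarrow> real) \<Rightarrow> nat set" where
  "alg_W f q \<omega> \<rho> = queried q \<rho> \<omega> (stop_time f q \<omega> \<rho>)"

definition valid_alg :: "((nat \<Rightarrow> real) \<Rightarrow> real) \<Rightarrow> ((nat \<Rightarrow> real) \<Rightarrow> (nat \<times> real) list \<Rightarrow> nat) \<Rightarrow> bool" where
  "valid_alg f q \<longleftrightarrow>
     (\<forall>h. (\<lambda>\<rho>. q \<rho> h) \<in> Cube \<rightarrow>\<^sub>M count_space UNIV) \<and>
     (AE p in Cube \<Otimes>\<^sub>M Cube. \<exists>k. witness f (queried q (snd p) (fst p) k) (fst p)) \<and>
     (\<forall>i. {p \<in> space (Cube \<Otimes>\<^sub>M Cube). i \<in> alg_W f q (fst p) (snd p)} \<in> sets (Cube \<Otimes>\<^sub>M Cube))"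

definition reveal_prob :: "((nat \<Rightarrow> real) \<Rightarrow> real) \<Rightarrow> ((nat \<Rightarrow> real) \<Rightarrow> (nat \<times> real) list \<Rightarrow> nat) \<Rightarrow> nat \<Rightarrow> real" where
  "reveal_prob f q i =
     measure (Cube \<Otimes>\<^sub>M Cube) {p \<in> space (Cube \<Otimes>\<^sub>M Cube). i \<in> alg_W f q (fst p) (snd p)}"

definition revealment :: "((nat \<Rightarrow> real) \<Rightarrow> real) \<Rightarrow> real" where
  "revealment f = (INF q\<in>{q. valid_alg f q}. SUP i. reveal_prob f q i)"

text \<open>Joint law of one coordinate (omega_i, omega^eps_i).\<close>
definition noise_pmf :: "real \<Rightarrow> (real \<times> real) pmf" where
  "noise_pmf \<epsilon> =
     do { x \<leftarrow> pmf_of_set {-1, 1::real};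
          r \<leftarrow> bernoulli_pmf \<epsilon>;
          z \<leftarrow> pmf_of_set {-1, 1::real};
          return_pmf (x, if r then z else x) }"

definition NoiseCube :: "real \<Rightarrow> (nat \<Rightarrow> real \<times> real) measure" where
  "NoiseCube \<epsilon> = PiM UNIV (\<lambda>_. measure_pmf (noise_pmf \<epsilon>))"

definition noise_corr :: "((nat \<Rightarrow> real) \<Rightarrow> real) \<Rightarrow> real \<Rightarrow> real" where
  "noise_corr f \<epsilon> = (\<integral>p. f (\<lambda>i. fst (p i)) * f (\<lambda>i. snd (p i)) \<partial>NoiseCube \<epsilon>)"

definition noise_sensitive :: "(nat \<Rightarrow> (nat \<Rightarrow> real) \<Rightarrow> real) \<Rightarrow> bool" where
  "noise_sensitive fs \<longleftrightarrow>
     (\<forall>\<epsilon>\<in>{0<..1}. (\<lambda>n. noise_corr (fs n) \<epsilon> - (\<integral>\<omega>. fs n \<omega> \<partial>Cube)^2) \<longlonglongrightarrow> 0)"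

end

theory Submission
  imports Defs
begin

text \<open>
  Write c(S) for the Walsh coefficient of f at S. Fix a query algorithm together with its auxiliary
  randomness, let J be the set of bits it reads, and let \<S> be a family of sets of equal size k.
  Testing f against u = \<Sum>S\<in>\<S>. c(S) \<chi>(S) 1[S \<inter> J \<noteq> {}] gives E[f u] = \<Sum> c(S)^2: on the event
  that S is not read completely, flipping the first unread bit of S changes the sign of \<chi>(S) but
  neither J nor f. For the same reason the summands of u are orthogonal, so
  E[u^2] = \<Sum> c(S)^2 P(S \<inter> J \<noteq> {}). Since E[f u]^2 \<le> E[u^2], a union bound and averaging over the
  randomness give the Schramm--Steif bound \<Sum>{c(S)^2 | card S = k} \<le> k \<delta>(f).
  The noise covariance is \<Sum>{(1 - \<epsilon>)^card S c(S)^2 | S \<noteq> {}} (computed for the averages of f over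
  the first N bits and passed to the limit), hence at most \<delta>(f) \<Sum>k. k (1 - \<epsilon>)^k, which is
  bounded by (1 - \<epsilon>) / \<epsilon>^2 \<delta>(f) and tends to 0.
\<close>

section \<open>The cube and coordinate flips\<close>

lemma sets_coin [simp]: "sets coin = UNIV"
  by (simp add: coin_def)

lemma space_coin [simp]: "space coin = UNIV"
  by (simp add: coin_def)

lemma prob_space_coin: "prob_space coin"
  by (simp add: coin_def prob_space_measure_pmf)

lemma measure_coin: "measure coin A = card (A \<inter> {-1, 1}) / 2"
  unfolding coin_def by (subst measure_pmf_of_set) (auto simp: card_insert_if Int_commute)

lemma space_Cube [simp]: "space Cube = UNIV"
  by (simp add: Cube_def space_PiM)

lemma prob_space_Cube: "prob_space Cube"
  unfolding Cube_def by (rule prob_space_PiM) (rule prob_space_coin)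

interpretation cube: prob_space Cube
  by (rule prob_space_Cube)

lemma sets_Cube_Diff_UNIV [intro]: "X \<in> sets Cube \<Longrightarrow> UNIV - X \<in> sets Cube"
  by (metis space_Cube sets.compl_sets)

lemma measurable_coord [measurable]: "(\<lambda>\<omega>. g (\<omega> i)) \<in> Cube \<rightarrow>\<^sub>M count_space UNIV"
proof -
  have "(\<lambda>\<omega>. \<omega> i) \<in> Cube \<rightarrow>\<^sub>M coin" unfolding Cube_def by simp
  then show ?thesis by (rule measurable_compose) (simp add: coin_def)
qed

lemma borel_measurable_coord [measurable]: "(\<lambda>\<omega>. g (\<omega> i)) \<in> borel_measurable Cube"
proof -
  have "(\<lambda>\<omega>. \<omega> i) \<in> Cube \<rightarrow>\<^sub>M coin" unfolding Cube_def by simp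
  then show ?thesis by (rule measurable_compose) (simp add: coin_def)
qed

lemma sets_Collect_coord [measurable]: "{\<omega>. P (\<omega> i)} \<in> sets Cube"
  using measurable_sets[OF measurable_coord[of P i], of "{True}"] by (simp add: vimage_def)

lemma AE_Cube_sign: "AE \<omega> in Cube. \<forall>i. \<omega> i \<in> {-1, 1}"
proof (subst AE_all_countable, intro allI)
  fix i :: nat
  have "AE x in coin. x \<in> {-1, 1}"
    unfolding coin_def by (rule AE_pmfI) (simp add: set_pmf_of_set)
  then show "AE \<omega> in Cube. \<omega> i \<in> {-1, 1}"
    unfolding Cube_def by (rule AE_PiM_component[rotated 2]) (auto simp: prob_space_coin)
qed

lemma integrable_Cube_bounded:
  "f \<in> borel_measurable Cube \<Longrightarrow> (\<And>\<omega>. \<bar>f \<omega>\<bar> \<le> B) \<Longrightarrow> integrable Cube (f :: _ \<Rightarrow> real)"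
  by (rule cube.integrable_const_bound[where B=B]) auto

lemma boolean_funD:
  assumes "boolean_fun f"
  shows "f \<in> borel_measurable Cube" "\<And>\<omega>. \<bar>f \<omega>\<bar> \<le> 1"
  using assms by (auto simp: boolean_fun_def) (metis abs_minus_cancel abs_one order_refl)

definition cylinder :: "nat set \<Rightarrow> (nat \<Rightarrow> 'a) \<Rightarrow> (nat \<Rightarrow> 'a) set" where
  "cylinder I x = {\<omega>. \<forall>i\<in>I. \<omega> i = x i}"

lemma cylinder_eq_prod_emb:
  "(\<And>i. space (M i) = UNIV) \<Longrightarrow> cylinder I x = prod_emb UNIV M I (Pi\<^sub>E I (\<lambda>i. {x i}))"
  by (auto simp: cylinder_def prod_emb_def PiE_iff)

lemma cylinder_restrict [simp]: "cylinder W (restrict \<omega> W) = cylinder W \<omega>"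
  by (auto simp: cylinder_def)

lemma sets_cylinder [measurable]: "finite I \<Longrightarrow> cylinder I x \<in> sets Cube"
  unfolding cylinder_eq_prod_emb[where M="\<lambda>_. coin", OF space_coin] Cube_def
  by (rule sets_PiM_I) auto

lemma measure_cylinder:
  assumes "finite I"
  shows "measure Cube (cylinder I x) = (if \<forall>i\<in>I. x i \<in> {-1, 1} then (1/2) ^ card I else 0)"
proof -
  have "emeasure Cube (cylinder I x) = (\<Prod>i\<in>I. emeasure coin {x i})"
    unfolding cylinder_eq_prod_emb[where M="\<lambda>_. coin", OF space_coin] Cube_def
    by (rule emeasure_PiM_emb) (auto simp: assms prob_space_coin)
  also have "\<dots> = ennreal (\<Prod>i\<in>I. measure coin {x i})"
    by (simp add: coin_def measure_pmf.emeasure_eq_measure prod_ennreal)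
  finally have "measure Cube (cylinder I x) = (\<Prod>i\<in>I. measure coin {x i})"
    by (simp add: cube.emeasure_eq_measure prod_nonneg)
  also have "\<dots> = (\<Prod>i\<in>I. if x i \<in> {-1, 1} then 1/2 else 0)"
    by (intro prod.cong) (auto simp: measure_coin)
  finally show ?thesis
    using assms by (auto simp: prod_constant)
qed

lemma AE_cylinder_const_unique:
  assumes "finite W" "\<forall>i\<in>W. x i \<in> {-1, 1}"
    and "AE \<omega> in Cube. \<omega> \<in> cylinder W x \<longrightarrow> g \<omega> = c"
    and "AE \<omega> in Cube. \<omega> \<in> cylinder W x \<longrightarrow> g \<omega> = c'"
  shows "c = c'"
proof (rule ccontr)
  assume "c \<noteq> c'"
  have "AE \<omega> in Cube. \<omega> \<notin> cylinder W x"
    using assms(3,4) by eventually_elim (use \<open>c \<noteq> c'\<close> in auto)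
  then have "measure Cube (cylinder W x) = 0"
    using cube.prob_eq_0[OF sets_cylinder[OF assms(1)]] by simp
  then show False
    using assms(1,2) by (simp add: measure_cylinder)
qed

lemma distr_PiM_componentwise:
  assumes M: "\<And>i. i \<in> I \<Longrightarrow> prob_space (M i)"
    and g: "\<And>i. i \<in> I \<Longrightarrow> g i \<in> M i \<rightarrow>\<^sub>M N i"
    and d: "\<And>i. i \<in> I \<Longrightarrow> distr (M i) (N i) (g i) = N i"
  shows "distr (PiM I M) (PiM I N) (\<lambda>x. \<lambda>i\<in>I. g i (x i)) = PiM I N"
proof (rule measure_eqI_PiM_infinite[symmetric, OF refl])
  have N: "\<And>i. i \<in> I \<Longrightarrow> prob_space (N i)"
    using M g d by (metis prob_space.prob_space_distr)
  interpret prob_space "PiM I N" using N by (rule prob_space_PiM)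
  show "finite_measure (PiM I N)" by unfold_locales
  have "(\<lambda>x. g i (x i)) \<in> PiM I M \<rightarrow>\<^sub>M N i" if "i \<in> I" for i
    using measurable_compose[of "\<lambda>x. x i" "PiM I M" "M i" "g i" "N i",
        OF measurable_component_singleton[OF that] g[OF that]] .
  then have meas: "(\<lambda>x. \<lambda>i\<in>I. g i (x i)) \<in> PiM I M \<rightarrow>\<^sub>M PiM I N"
    by (intro measurable_PiM_single') (auto simp: space_PiM PiE_iff measurable_space[OF g])
  show "sets (distr (PiM I M) (PiM I N) (\<lambda>x. \<lambda>i\<in>I. g i (x i))) = sets (PiM I N)" by simp
  fix A J assume J: "finite J" "J \<subseteq> I" and A: "\<And>i. i \<in> J \<Longrightarrow> A i \<in> sets (N i)"
  have pre: "(\<lambda>x. \<lambda>i\<in>I. g i (x i)) -` prod_emb I N J (Pi\<^sub>E J A) \<inter> space (PiM I M)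
      = prod_emb I M J (Pi\<^sub>E J (\<lambda>j. g j -` A j \<inter> space (M j)))"
    using J g by (auto simp: prod_emb_def space_PiM PiE_iff subset_eq) (metis measurable_space)
  have "emeasure (distr (PiM I M) (PiM I N) (\<lambda>x. \<lambda>i\<in>I. g i (x i))) (prod_emb I N J (Pi\<^sub>E J A))
      = emeasure (PiM I M) (prod_emb I M J (Pi\<^sub>E J (\<lambda>j. g j -` A j \<inter> space (M j))))"
    using J A by (subst emeasure_distr[OF meas]) (auto intro!: sets_PiM_I simp: pre)
  also have "\<dots> = (\<Prod>j\<in>J. emeasure (M j) (g j -` A j \<inter> space (M j)))"
    using J A g M by (intro emeasure_PiM_emb) (auto intro!: measurable_sets)
  also have "\<dots> = (\<Prod>j\<in>J. emeasure (N j) (A j))"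
    using J A g d by (intro prod.cong refl) (metis emeasure_distr subsetD)
  also have "\<dots> = emeasure (PiM I N) (prod_emb I N J (Pi\<^sub>E J A))"
    using J A N by (intro emeasure_PiM_emb[symmetric]) auto
  finally show "emeasure (PiM I N) (prod_emb I N J (Pi\<^sub>E J A)) =
     emeasure (distr (PiM I M) (PiM I N) (\<lambda>x. \<lambda>i\<in>I. g i (x i))) (prod_emb I N J (Pi\<^sub>E J A))"
    by simp
qed

definition flip :: "nat \<Rightarrow> (nat \<Rightarrow> real) \<Rightarrow> (nat \<Rightarrow> real)" where
  "flip i \<omega> = fun_upd \<omega> i (- \<omega> i)"

lemma flip_apply: "flip i \<omega> j = (if j = i then - \<omega> i else \<omega> j)"
  by (simp add: flip_def)

lemma flip_flip [simp]: "flip i (flip i \<omega>) = \<omega>"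
  by (auto simp: flip_def)

lemma cylinder_flip: "i \<notin> W \<Longrightarrow> cylinder W (flip i \<omega>) = cylinder W \<omega>"
  by (auto simp: cylinder_def flip_apply)

lemma measurable_flip [measurable]: "flip i \<in> Cube \<rightarrow>\<^sub>M Cube"
  unfolding Cube_def
proof (rule measurable_PiM_single')
  fix j
  have "(\<lambda>\<omega>. - \<omega> i) \<in> Pi\<^sub>M UNIV (\<lambda>_. coin) \<rightarrow>\<^sub>M coin"
    using measurable_coord[of uminus i] by (simp add: Cube_def coin_def)
  then show "(\<lambda>\<omega>. flip i \<omega> j) \<in> Pi\<^sub>M UNIV (\<lambda>_. coin) \<rightarrow>\<^sub>M coin"
    by (cases "j = i") (simp_all add: flip_def)
qed (simp add: space_PiM)

lemma distr_coin_uminus: "distr coin coin uminus = coin"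
proof -
  have "distr coin coin uminus = measure_pmf (map_pmf uminus (pmf_of_set {-1, 1::real}))"
    unfolding map_pmf_rep_eq by (rule distr_cong) (simp_all add: coin_def)
  also have "map_pmf uminus (pmf_of_set {-1, 1::real}) = pmf_of_set (uminus ` {-1, 1})"
    by (rule map_pmf_of_set_inj) auto
  finally show ?thesis
    by (simp add: coin_def insert_commute)
qed

lemma distr_flip: "distr Cube Cube (flip i) = Cube"
proof -
  let ?g = "\<lambda>j. if j = i then (uminus :: real \<Rightarrow> real) else id"
  have "distr Cube Cube (\<lambda>x. \<lambda>j\<in>UNIV. ?g j (x j)) = Cube"
    unfolding Cube_def
    by (rule distr_PiM_componentwise)
      (auto simp: measurable_def prob_space_coin distr_coin_uminus id_def distr_id)
  moreover have "(\<lambda>x. \<lambda>j\<in>UNIV. ?g j (x j)) = flip i"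
    by (auto simp: flip_def fun_eq_iff)
  ultimately show ?thesis by simp
qed

lemma integral_flip:
  assumes [measurable]: "h \<in> borel_measurable Cube"
  shows "(\<integral>\<omega>. h (flip i \<omega>) \<partial>Cube) = (\<integral>\<omega>. (h \<omega> :: real) \<partial>Cube)"
  by (subst (2) distr_flip[symmetric, of i]) (simp add: integral_distr)

lemma AE_flip: "AE \<omega> in Cube. P \<omega> \<Longrightarrow> AE \<omega> in Cube. P (flip i \<omega>)"
  by (rule AE_distrD[of "flip i" Cube Cube]) (simp_all only: distr_flip measurable_flip)

lemma integral_eq_0_of_flip_antisymmetric:
  assumes "G \<in> borel_measurable Cube"
    and "AE \<omega> in Cube. G (flip i \<omega>) = - G \<omega>"
  shows "(\<integral>\<omega>. G \<omega> \<partial>Cube) = (0::real)"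
proof -
  have "(\<integral>\<omega>. G \<omega> \<partial>Cube) = (\<integral>\<omega>. G (flip i \<omega>) \<partial>Cube)"
    using integral_flip[OF assms(1)] by simp
  also have "\<dots> = (\<integral>\<omega>. - G \<omega> \<partial>Cube)"
    by (rule integral_cong_AE) (use assms in auto)
  finally show ?thesis by simp
qed

section \<open>Walsh characters\<close>

definition walsh :: "nat set \<Rightarrow> (nat \<Rightarrow> real) \<Rightarrow> real" where
  "walsh S \<omega> = (\<Prod>i\<in>S. sgn (\<omega> i))"

definition walsh_coeff :: "((nat \<Rightarrow> real) \<Rightarrow> real) \<Rightarrow> nat set \<Rightarrow> real" where
  "walsh_coeff f S = (\<integral>\<omega>. f \<omega> * walsh S \<omega> \<partial>Cube)"

lemma borel_measurable_walsh [measurable]: "walsh S \<in> borel_measurable Cube"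
  unfolding walsh_def by measurable

lemma abs_walsh_le: "\<bar>walsh S \<omega>\<bar> \<le> 1"
  unfolding walsh_def abs_prod by (intro prod_le_1) (auto simp: abs_sgn_eq)

lemma walsh_flip:
  assumes "finite S"
  shows "walsh S (flip i \<omega>) = (if i \<in> S then - walsh S \<omega> else walsh S \<omega>)"
proof (cases "i \<in> S")
  case True
  then show ?thesis
    unfolding walsh_def using assms
    by (subst (1 2) prod.remove[of S i]) (auto simp: flip_apply intro!: prod.cong)
qed (auto simp: walsh_def flip_apply intro!: prod.cong)

lemma walsh_square_flip: "walsh S (flip i \<omega>) ^ 2 = walsh S \<omega> ^ 2"
  unfolding walsh_def prod_power_distrib by (intro prod.cong) (auto simp: flip_apply)

lemma AE_walsh_square: "AE \<omega> in Cube. walsh S \<omega> ^ 2 = 1"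
  using AE_Cube_sign
  by eventually_elim (auto simp: walsh_def prod_power_distrib intro!: prod.neutral, metis sgn_minus sgn_one power2_minus one_power2)

lemma walsh_mult:
  assumes "finite S" "finite S'"
  shows "walsh S \<omega> * walsh S' \<omega> = walsh ((S - S') \<union> (S' - S)) \<omega> * walsh (S \<inter> S') \<omega> ^ 2"
proof -
  have "walsh S \<omega> = walsh (S - S') \<omega> * walsh (S \<inter> S') \<omega>"
    "walsh S' \<omega> = walsh (S' - S) \<omega> * walsh (S \<inter> S') \<omega>"
    "walsh ((S - S') \<union> (S' - S)) \<omega> = walsh (S - S') \<omega> * walsh (S' - S) \<omega>"
    unfolding walsh_def using assms
    by (subst prod.union_disjoint[symmetric]; auto intro!: prod.cong)+
  then show ?thesis by (simp add: power2_eq_square)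
qed

lemma walsh_eq_prod: "\<forall>i\<in>S. x i \<in> {-1, 1} \<Longrightarrow> walsh S x = (\<Prod>i\<in>S. x i)"
  unfolding walsh_def by (intro prod.cong) auto

lemma integral_walsh_mult_walsh:
  assumes "finite S" "finite S'" "S \<noteq> S'"
  shows "(\<integral>\<omega>. walsh S \<omega> * walsh S' \<omega> \<partial>Cube) = 0"
proof -
  obtain i where "i \<in> S \<and> i \<notin> S' \<or> i \<in> S' \<and> i \<notin> S"
    using assms(3) by blast
  then show ?thesis
    by (intro integral_eq_0_of_flip_antisymmetric[where i=i] AE_I2)
      (auto simp: walsh_flip assms)
qed

section \<open>Revealed sets and the Schramm--Steif inequality\<close>

lemma (in prob_space) square_expectation_le:
  fixes u :: "'a \<Rightarrow> real"
  assumes "integrable M u" "integrable M (\<lambda>x. u x ^ 2)"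
  shows "expectation u ^ 2 \<le> expectation (\<lambda>x. u x ^ 2)"
proof -
  have "0 \<le> variance u"
    by (rule Bochner_Integration.integral_nonneg) simp
  then show ?thesis
    using variance_eq[OF assms] by simp
qed

lemma of_bool_not_subset_eq_sum_first_missing:
  fixes T A :: "'a :: linorder set"
  assumes "finite T"
  shows "of_bool (\<not> T \<subseteq> A) = (\<Sum>i\<in>T. of_bool (i \<notin> A \<and> (\<forall>j\<in>T. j < i \<longrightarrow> j \<in> A)) :: real)"
proof (cases "T \<subseteq> A")
  case False
  define m where "m = Min (T - A)"
  have "T - A \<noteq> {}" "finite (T - A)"
    using False assms by auto
  then have m: "m \<in> T - A" "\<And>j. j \<in> T - A \<Longrightarrow> m \<le> j"
    unfolding m_def by (auto intro: Min_in Min_le simp del: Diff_iff)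
  have "i \<notin> A \<and> (\<forall>j\<in>T. j < i \<longrightarrow> j \<in> A) \<longleftrightarrow> i = m" if "i \<in> T" for i
    using m that by (metis DiffD1 DiffD2 DiffI leD le_neq_trans)
  then have "(\<Sum>i\<in>T. of_bool (i \<notin> A \<and> (\<forall>j\<in>T. j < i \<longrightarrow> j \<in> A)) :: real) = (\<Sum>i\<in>T. of_bool (i = m))"
    by (intro sum.cong) auto
  then show ?thesis
    using m(1) False assms by simp
qed (auto intro!: sum.neutral)

text \<open>
  The model case of a revealed set is the set of bits read by a query algorithm, for fixed
  auxiliary randomness.
\<close>

locale revealed_set =
  fixes J :: "(nat \<Rightarrow> real) \<Rightarrow> nat set"
  assumes sets_revealed: "\<And>i. {\<omega>. i \<in> J \<omega>} \<in> sets Cube"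
    and revealed_flip: "\<And>i. AE \<omega> in Cube. i \<notin> J \<omega> \<longrightarrow> J (flip i \<omega>) = J \<omega>"
begin

definition flip_stable :: "((nat \<Rightarrow> real) \<Rightarrow> real) \<Rightarrow> bool" where
  "flip_stable F \<longleftrightarrow> (\<forall>i. AE \<omega> in Cube. i \<notin> J \<omega> \<longrightarrow> F (flip i \<omega>) = F \<omega>)"

lemma flip_stable_mult:
  assumes "flip_stable F" "flip_stable G"
  shows "flip_stable (\<lambda>\<omega>. F \<omega> * G \<omega>)"
  unfolding flip_stable_def
proof
  fix i
  show "AE \<omega> in Cube. i \<notin> J \<omega> \<longrightarrow> F (flip i \<omega>) * G (flip i \<omega>) = F \<omega> * G \<omega>"
    using assms[unfolded flip_stable_def, THEN spec[of _ i]] by eventually_elim auto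
qed

lemma flip_stable_walsh_square: "flip_stable (\<lambda>\<omega>. walsh S \<omega> ^ 2)"
  by (simp add: flip_stable_def walsh_square_flip)

lemma sets_revealed_Collect:
  assumes "finite T"
  shows "{\<omega>. T \<subseteq> J \<omega>} \<in> sets Cube" "{\<omega>. \<not> T \<subseteq> J \<omega>} \<in> sets Cube"
    "{\<omega>. T \<inter> J \<omega> = {}} \<in> sets Cube" "{\<omega>. T \<inter> J \<omega> \<noteq> {}} \<in> sets Cube"
    "{\<omega>. i \<notin> J \<omega>} \<in> sets Cube"
proof -
  have "{\<omega>. i \<notin> J \<omega>} = UNIV - {\<omega>. i \<in> J \<omega>}" for i
    by auto
  then show notin: "{\<omega>. i \<notin> J \<omega>} \<in> sets Cube" for i
    using sets_revealed by auto
  have "{\<omega>. T \<subseteq> J \<omega>} = {\<omega>\<in>space Cube. \<forall>i\<in>T. i \<in> J \<omega>}"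
    by auto
  also have "\<dots> \<in> sets Cube"
    using assms sets_revealed by (intro sets.sets_Collect_finite_All) auto
  finally show sub: "{\<omega>. T \<subseteq> J \<omega>} \<in> sets Cube" .
  have "{\<omega>. T \<inter> J \<omega> = {}} = {\<omega>\<in>space Cube. \<forall>i\<in>T. i \<notin> J \<omega>}"
    by auto
  also have "\<dots> \<in> sets Cube"
    using assms notin by (intro sets.sets_Collect_finite_All) auto
  finally show dis: "{\<omega>. T \<inter> J \<omega> = {}} \<in> sets Cube" .
  have "{\<omega>. \<not> T \<subseteq> J \<omega>} = UNIV - {\<omega>. T \<subseteq> J \<omega>}"
    "{\<omega>. T \<inter> J \<omega> \<noteq> {}} = UNIV - {\<omega>. T \<inter> J \<omega> = {}}"
    by auto
  then show "{\<omega>. \<not> T \<subseteq> J \<omega>} \<in> sets Cube" "{\<omega>. T \<inter> J \<omega> \<noteq> {}} \<in> sets Cube"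
    using sub dis by auto
qed


lemma sets_first_unrevealed:
  "finite T \<Longrightarrow> {\<omega>. i \<notin> J \<omega> \<and> (\<forall>j\<in>T. j < i \<longrightarrow> j \<in> J \<omega>)} \<in> sets Cube"
proof -
  assume "finite T"
  have "{\<omega>. i \<notin> J \<omega> \<and> (\<forall>j\<in>T. j < i \<longrightarrow> j \<in> J \<omega>)} = {\<omega>. i \<notin> J \<omega>} \<inter> {\<omega>. {j\<in>T. j < i} \<subseteq> J \<omega>}"
    by auto
  then show ?thesis
    using sets_revealed_Collect \<open>finite T\<close> by auto
qed

text \<open>
  On the event that \<open>i \<in> T\<close> is the first coordinate of \<open>T\<close> outside \<open>J\<close>, flipping \<open>i\<close> preserves
  the event and \<open>F\<close> but changes the sign of \<open>walsh T\<close>.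
\<close>

lemma integral_walsh_first_unrevealed:
  assumes T: "finite T" "i \<in> T" and F: "F \<in> borel_measurable Cube" "flip_stable F"
  defines "E \<equiv> {\<omega>. i \<notin> J \<omega> \<and> (\<forall>j\<in>T. j < i \<longrightarrow> j \<in> J \<omega>)}"
  shows "(\<integral>\<omega>. walsh T \<omega> * F \<omega> * indicator E \<omega> \<partial>Cube) = 0"
proof (rule integral_eq_0_of_flip_antisymmetric[where i=i])
  show "(\<lambda>\<omega>. walsh T \<omega> * F \<omega> * indicator E \<omega>) \<in> borel_measurable Cube"
    using F sets_first_unrevealed[OF T(1)] unfolding E_def by measurable
  have ae: "AE \<omega> in Cube. i \<notin> J \<omega> \<longrightarrow> J (flip i \<omega>) = J \<omega> \<and> F (flip i \<omega>) = F \<omega>"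
    using revealed_flip[of i] F(2)[unfolded flip_stable_def, THEN spec[of _ i]]
    by eventually_elim auto
  show "AE \<omega> in Cube. walsh T (flip i \<omega>) * F (flip i \<omega>) * indicator E (flip i \<omega>)
      = - (walsh T \<omega> * F \<omega> * indicator E \<omega>)"
    using ae AE_flip[OF ae, of i]
  proof eventually_elim
    case (elim \<omega>)
    show ?case
    proof (cases "\<omega> \<in> E \<or> flip i \<omega> \<in> E")
      case True
      then have "J (flip i \<omega>) = J \<omega>" "F (flip i \<omega>) = F \<omega>"
        using elim by (auto simp: E_def)
      then show ?thesis
        using T by (simp add: walsh_flip indicator_def E_def)
    qed auto
  qed
qed

lemma integral_walsh_not_subset_revealed:
  assumes T: "finite T"
    and F: "F \<in> borel_measurable Cube" "\<And>\<omega>. \<bar>F \<omega>\<bar> \<le> 1" "flip_stable F"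
  shows "(\<integral>\<omega>. walsh T \<omega> * F \<omega> * indicator {\<omega>. \<not> T \<subseteq> J \<omega>} \<omega> \<partial>Cube) = 0"
proof -
  define E where "E i = {\<omega>. i \<notin> J \<omega> \<and> (\<forall>j\<in>T. j < i \<longrightarrow> j \<in> J \<omega>)}" for i
  have eq: "walsh T \<omega> * F \<omega> * indicator {\<omega>. \<not> T \<subseteq> J \<omega>} \<omega>
      = (\<Sum>i\<in>T. walsh T \<omega> * F \<omega> * indicator (E i) \<omega>)" for \<omega>
    using of_bool_not_subset_eq_sum_first_missing[OF T, of "J \<omega>"]
    by (simp add: indicator_def E_def sum_distrib_left)
  have bound: "\<bar>walsh T \<omega> * F \<omega> * indicator (E i) \<omega>\<bar> \<le> 1" for i \<omega>
    using abs_walsh_le[of T \<omega>] F(2)[of \<omega>]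
    by (simp add: abs_mult indicator_def mult_le_one)
  have "(\<integral>\<omega>. walsh T \<omega> * F \<omega> * indicator {\<omega>. \<not> T \<subseteq> J \<omega>} \<omega> \<partial>Cube)
      = (\<Sum>i\<in>T. \<integral>\<omega>. walsh T \<omega> * F \<omega> * indicator (E i) \<omega> \<partial>Cube)"
    unfolding eq
  proof (rule Bochner_Integration.integral_sum)
    fix i
    show "integrable Cube (\<lambda>\<omega>. walsh T \<omega> * F \<omega> * indicator (E i) \<omega>)"
      using F(1) sets_first_unrevealed[OF T, of i] bound
      by (intro integrable_Cube_bounded[where B=1]) (simp_all add: E_def)
  qed
  also have "\<dots> = 0"
    using integral_walsh_first_unrevealed[OF T _ F(1,3)] by (simp add: E_def)
  finally show ?thesis .
qed

lemma integral_walsh_pair_revealed: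
  assumes S: "finite S" "finite S'" "card S = card S'" "S \<noteq> S'"
    and \<Phi>: "\<Phi> \<in> borel_measurable Cube" "\<And>\<omega>. \<bar>\<Phi> \<omega>\<bar> \<le> 1" "flip_stable \<Phi>"
    and separated: "\<And>\<omega>. \<Phi> \<omega> \<noteq> 0 \<Longrightarrow> (S - S') \<inter> J \<omega> = {} \<or> (S' - S) \<inter> J \<omega> = {}"
  shows "(\<integral>\<omega>. walsh S \<omega> * walsh S' \<omega> * \<Phi> \<omega> \<partial>Cube) = 0"
proof -
  define T where "T = (S - S') \<union> (S' - S)"
  have "S - S' \<noteq> {}" "S' - S \<noteq> {}"
    using S card_subset_eq by (metis Diff_eq_empty_iff)+
  then have eq: "walsh S \<omega> * walsh S' \<omega> * \<Phi> \<omega>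
      = walsh T \<omega> * (walsh (S \<inter> S') \<omega> ^ 2 * \<Phi> \<omega>) * indicator {\<omega>. \<not> T \<subseteq> J \<omega>} \<omega>" for \<omega>
    using separated[of \<omega>] walsh_mult[OF S(1,2), of \<omega>] by (auto simp: T_def indicator_def)
  have "(\<integral>\<omega>. walsh S \<omega> * walsh S' \<omega> * \<Phi> \<omega> \<partial>Cube)
      = (\<integral>\<omega>. walsh T \<omega> * (walsh (S \<inter> S') \<omega> ^ 2 * \<Phi> \<omega>) * indicator {\<omega>. \<not> T \<subseteq> J \<omega>} \<omega> \<partial>Cube)"
    by (simp only: eq)
  also have "\<dots> = 0"
  proof (rule integral_walsh_not_subset_revealed)
    show "\<bar>walsh (S \<inter> S') \<omega> ^ 2 * \<Phi> \<omega>\<bar> \<le> 1" for \<omega>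
      using \<Phi>(2)[of \<omega>] abs_walsh_le[of "S \<inter> S'" \<omega>]
      by (simp add: abs_mult, intro mult_le_one) (simp_all add: abs_square_le_1)
    show "finite T"
      using S by (simp add: T_def)
    show "(\<lambda>\<omega>. walsh (S \<inter> S') \<omega> ^ 2 * \<Phi> \<omega>) \<in> borel_measurable Cube"
      using \<Phi>(1) by measurable
    show "flip_stable (\<lambda>\<omega>. walsh (S \<inter> S') \<omega> ^ 2 * \<Phi> \<omega>)"
      by (intro flip_stable_mult flip_stable_walsh_square \<Phi>(3))
  qed
  finally show ?thesis .
qed

end

context revealed_set
begin

lemma flip_stable_indicator_revealed: "flip_stable (indicator {\<omega>. P (J \<omega>)})"
  unfolding flip_stable_def indicator_def by (intro allI eventually_mono[OF revealed_flip]) auto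

lemma integral_walsh_hit:
  assumes S: "finite S" "S \<noteq> {}"
    and f: "f \<in> borel_measurable Cube" "\<And>\<omega>. \<bar>f \<omega>\<bar> \<le> 1" "flip_stable f"
  shows "(\<integral>\<omega>. f \<omega> * walsh S \<omega> * indicator {\<omega>. S \<inter> J \<omega> \<noteq> {}} \<omega> \<partial>Cube) = walsh_coeff f S"
proof -
  have sets: "{\<omega>. S \<inter> J \<omega> \<noteq> {}} \<in> sets Cube" "{\<omega>. S \<inter> J \<omega> = {}} \<in> sets Cube"
    using sets_revealed_Collect[OF S(1)] by auto
  have bound: "\<bar>f \<omega> * walsh S \<omega> * indicator A \<omega>\<bar> \<le> 1" for A \<omega>
    using abs_walsh_le[of S \<omega>] f(2)[of \<omega>] by (simp add: abs_mult indicator_def mult_le_one)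
  have "(\<integral>\<omega>. walsh S \<omega> * (f \<omega> * indicator {\<omega>. S \<inter> J \<omega> = {}} \<omega>) * indicator {\<omega>. \<not> S \<subseteq> J \<omega>} \<omega> \<partial>Cube) = 0"
  proof (rule integral_walsh_not_subset_revealed[OF S(1)])
    show "(\<lambda>\<omega>. f \<omega> * indicator {\<omega>. S \<inter> J \<omega> = {}} \<omega>) \<in> borel_measurable Cube"
      using f(1) sets(2) by measurable
    show "\<bar>f \<omega> * indicator {\<omega>. S \<inter> J \<omega> = {}} \<omega>\<bar> \<le> 1" for \<omega>
      using f(2)[of \<omega>] by (simp add: abs_mult indicator_def)
    show "flip_stable (\<lambda>\<omega>. f \<omega> * indicator {\<omega>. S \<inter> J \<omega> = {}} \<omega>)"
      by (intro flip_stable_mult f(3) flip_stable_indicator_revealed)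
  qed
  moreover have "walsh S \<omega> * (f \<omega> * indicator {\<omega>. S \<inter> J \<omega> = {}} \<omega>) * indicator {\<omega>. \<not> S \<subseteq> J \<omega>} \<omega>
      = f \<omega> * walsh S \<omega> * indicator {\<omega>. S \<inter> J \<omega> = {}} \<omega>" for \<omega>
    using S(2) by (auto simp: indicator_def)
  ultimately have unhit: "(\<integral>\<omega>. f \<omega> * walsh S \<omega> * indicator {\<omega>. S \<inter> J \<omega> = {}} \<omega> \<partial>Cube) = 0"
    by simp
  have "f \<omega> * walsh S \<omega> = f \<omega> * walsh S \<omega> * indicator {\<omega>. S \<inter> J \<omega> \<noteq> {}} \<omega>
      + f \<omega> * walsh S \<omega> * indicator {\<omega>. S \<inter> J \<omega> = {}} \<omega>" for \<omega>
    by (auto simp: indicator_def)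
  then have "walsh_coeff f S = (\<integral>\<omega>. f \<omega> * walsh S \<omega> * indicator {\<omega>. S \<inter> J \<omega> \<noteq> {}} \<omega>
      + f \<omega> * walsh S \<omega> * indicator {\<omega>. S \<inter> J \<omega> = {}} \<omega> \<partial>Cube)"
    unfolding walsh_coeff_def by simp
  also have "\<dots> = (\<integral>\<omega>. f \<omega> * walsh S \<omega> * indicator {\<omega>. S \<inter> J \<omega> \<noteq> {}} \<omega> \<partial>Cube)
      + (\<integral>\<omega>. f \<omega> * walsh S \<omega> * indicator {\<omega>. S \<inter> J \<omega> = {}} \<omega> \<partial>Cube)"
    using f(1) sets bound by (intro Bochner_Integration.integral_add integrable_Cube_bounded) simp_all
  finally show ?thesis
    using unhit by simp
qed

lemma integral_walsh_pair_some_unhit: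
  assumes S: "finite S" "finite S'" "card S = card S'" "S \<noteq> S'"
  shows "(\<integral>\<omega>. walsh S \<omega> * walsh S' \<omega> * indicator {\<omega>. S \<inter> J \<omega> = {} \<or> S' \<inter> J \<omega> = {}} \<omega> \<partial>Cube) = 0"
proof (rule integral_walsh_pair_revealed[OF S])
  have "{\<omega>. S \<inter> J \<omega> = {} \<or> S' \<inter> J \<omega> = {}} \<in> sets Cube"
    using sets_revealed_Collect(3)[OF S(1)] sets_revealed_Collect(3)[OF S(2)]
    by (auto simp: Collect_disj_eq)
  then show "indicator {\<omega>. S \<inter> J \<omega> = {} \<or> S' \<inter> J \<omega> = {}} \<in> borel_measurable Cube"
    by simp
  show "\<bar>indicator {\<omega>. S \<inter> J \<omega> = {} \<or> S' \<inter> J \<omega> = {}} \<omega>\<bar> \<le> (1::real)" for \<omega>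
    by simp
  show "flip_stable (indicator {\<omega>. S \<inter> J \<omega> = {} \<or> S' \<inter> J \<omega> = {}})"
    by (rule flip_stable_indicator_revealed)
  show "(S - S') \<inter> J \<omega> = {} \<or> (S' - S) \<inter> J \<omega> = {}"
    if "indicator {\<omega>. S \<inter> J \<omega> = {} \<or> S' \<inter> J \<omega> = {}} \<omega> \<noteq> (0::real)" for \<omega>
  proof -
    have "S \<inter> J \<omega> = {} \<or> S' \<inter> J \<omega> = {}"
      using that by (cases "S \<inter> J \<omega> = {} \<or> S' \<inter> J \<omega> = {}") auto
    then show ?thesis
      by auto
  qed
qed

lemma integral_walsh_walsh_hit:
  assumes S: "finite S" "finite S'" "card S = card S'"
  shows "(\<integral>\<omega>. walsh S \<omega> * walsh S' \<omega> *
            (indicator {\<omega>. S \<inter> J \<omega> \<noteq> {}} \<omega> * indicator {\<omega>. S' \<inter> J \<omega> \<noteq> {}} \<omega>) \<partial>Cube)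
    = (if S = S' then measure Cube {\<omega>. S \<inter> J \<omega> \<noteq> {}} else 0)"
proof (cases "S = S'")
  case True
  have hit: "{\<omega>. S \<inter> J \<omega> \<noteq> {}} \<in> sets Cube"
    using sets_revealed_Collect[OF S(1)] by auto
  have "(\<integral>\<omega>. walsh S \<omega> * walsh S \<omega> *
            (indicator {\<omega>. S \<inter> J \<omega> \<noteq> {}} \<omega> * indicator {\<omega>. S \<inter> J \<omega> \<noteq> {}} \<omega>) \<partial>Cube)
      = (\<integral>\<omega>. indicator {\<omega>. S \<inter> J \<omega> \<noteq> {}} \<omega> \<partial>Cube)"
  proof (rule integral_cong_AE)
    show "AE \<omega> in Cube. walsh S \<omega> * walsh S \<omega> *
            (indicator {\<omega>. S \<inter> J \<omega> \<noteq> {}} \<omega> * indicator {\<omega>. S \<inter> J \<omega> \<noteq> {}} \<omega>)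
        = indicator {\<omega>. S \<inter> J \<omega> \<noteq> {}} \<omega>"
      using AE_walsh_square[of S] by eventually_elim (simp add: indicator_def power2_eq_square)
  qed (use hit in measurable)
  then show ?thesis
    using True hit by simp
next
  case False
  let ?\<Phi> = "indicator {\<omega>. S \<inter> J \<omega> = {} \<or> S' \<inter> J \<omega> = {}} :: _ \<Rightarrow> real"
  have "{\<omega>. S \<inter> J \<omega> = {} \<or> S' \<inter> J \<omega> = {}} \<in> sets Cube"
    using sets_revealed_Collect(3)[OF S(1)] sets_revealed_Collect(3)[OF S(2)]
    by (auto simp: Collect_disj_eq)
  then have "integrable Cube (\<lambda>\<omega>. walsh S \<omega> * walsh S' \<omega> * g \<omega>)"
    if "g \<in> {\<lambda>_. 1, ?\<Phi>}" for g
    using that abs_walsh_le[of S] abs_walsh_le[of S']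
    by (intro integrable_Cube_bounded[where B=1]) (auto simp: abs_mult mult_le_one)
  then have "integrable Cube (\<lambda>\<omega>. walsh S \<omega> * walsh S' \<omega> * 1)"
    "integrable Cube (\<lambda>\<omega>. walsh S \<omega> * walsh S' \<omega> * ?\<Phi> \<omega>)"
    by blast+
  moreover have "walsh S \<omega> * walsh S' \<omega> *
          (indicator {\<omega>. S \<inter> J \<omega> \<noteq> {}} \<omega> * indicator {\<omega>. S' \<inter> J \<omega> \<noteq> {}} \<omega>)
      = walsh S \<omega> * walsh S' \<omega> * 1 - walsh S \<omega> * walsh S' \<omega> * ?\<Phi> \<omega>" for \<omega>
    by (auto simp: indicator_def)
  ultimately show ?thesis
    using integral_walsh_mult_walsh[OF S(1,2) False] integral_walsh_pair_some_unhit[OF S False] False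
    by simp
qed

definition hit_sum :: "(nat set \<Rightarrow> real) \<Rightarrow> nat set set \<Rightarrow> (nat \<Rightarrow> real) \<Rightarrow> real" where
  "hit_sum a \<S> \<omega> = (\<Sum>S\<in>\<S>. a S * (walsh S \<omega> * indicator {\<omega>. S \<inter> J \<omega> \<noteq> {}} \<omega>))"

lemma hit_sum_bounds:
  assumes "\<And>S. S \<in> \<S> \<Longrightarrow> finite S"
  shows "hit_sum a \<S> \<in> borel_measurable Cube" "\<bar>hit_sum a \<S> \<omega>\<bar> \<le> (\<Sum>S\<in>\<S>. \<bar>a S\<bar>)"
proof -
  show "hit_sum a \<S> \<in> borel_measurable Cube"
    unfolding hit_sum_def using assms sets_revealed_Collect(4)
    by (intro borel_measurable_sum borel_measurable_times borel_measurable_const borel_measurable_walsh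
        borel_measurable_indicator) auto
  have "\<bar>a S * (walsh S \<omega> * indicator A \<omega>)\<bar> \<le> \<bar>a S\<bar>" for S A
    using abs_walsh_le[of S \<omega>] by (simp add: abs_mult indicator_def mult_left_le)
  then show "\<bar>hit_sum a \<S> \<omega>\<bar> \<le> (\<Sum>S\<in>\<S>. \<bar>a S\<bar>)"
    unfolding hit_sum_def by (rule order_trans[OF sum_abs sum_mono])
qed

lemma integral_mult_hit_sum:
  assumes \<S>: "\<And>S. S \<in> \<S> \<Longrightarrow> finite S \<and> S \<noteq> {}"
    and f: "f \<in> borel_measurable Cube" "\<And>\<omega>. \<bar>f \<omega>\<bar> \<le> 1" "flip_stable f"
  shows "(\<integral>\<omega>. f \<omega> * hit_sum a \<S> \<omega> \<partial>Cube) = (\<Sum>S\<in>\<S>. a S * walsh_coeff f S)"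
proof -
  let ?g = "\<lambda>S \<omega>. f \<omega> * walsh S \<omega> * indicator {\<omega>. S \<inter> J \<omega> \<noteq> {}} \<omega>"
  have "integrable Cube (?g S)" if "S \<in> \<S>" for S
  proof (rule integrable_Cube_bounded[where B=1])
    show "?g S \<in> borel_measurable Cube"
      using f(1) sets_revealed_Collect(4)[of S] \<S>[OF that]
      by (intro borel_measurable_times borel_measurable_walsh borel_measurable_indicator) auto
    show "\<bar>?g S \<omega>\<bar> \<le> 1" for \<omega>
      using abs_walsh_le[of S \<omega>] f(2)[of \<omega>] by (simp add: abs_mult indicator_def mult_le_one)
  qed
  then have "(\<integral>\<omega>. (\<Sum>S\<in>\<S>. a S * ?g S \<omega>) \<partial>Cube) = (\<Sum>S\<in>\<S>. a S * (\<integral>\<omega>. ?g S \<omega> \<partial>Cube))"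
    by (simp add: Bochner_Integration.integral_sum)
  moreover have "f \<omega> * hit_sum a \<S> \<omega> = (\<Sum>S\<in>\<S>. a S * ?g S \<omega>)" for \<omega>
    unfolding hit_sum_def sum_distrib_left by (intro sum.cong refl) (simp only: mult_ac)
  ultimately show ?thesis
    using integral_walsh_hit[OF _ _ f] \<S> by simp
qed

lemma integral_hit_sum_square:
  assumes \<S>: "finite \<S>" "\<And>S. S \<in> \<S> \<Longrightarrow> finite S \<and> card S = k"
  shows "(\<integral>\<omega>. hit_sum a \<S> \<omega> ^ 2 \<partial>Cube) = (\<Sum>S\<in>\<S>. a S ^ 2 * measure Cube {\<omega>. S \<inter> J \<omega> \<noteq> {}})"
proof -
  let ?g = "\<lambda>S S' \<omega>. walsh S \<omega> * walsh S' \<omega> *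
    (indicator {\<omega>. S \<inter> J \<omega> \<noteq> {}} \<omega> * indicator {\<omega>. S' \<inter> J \<omega> \<noteq> {}} \<omega>)"
  have "integrable Cube (?g S S')" if "S \<in> \<S>" "S' \<in> \<S>" for S S'
  proof (rule integrable_Cube_bounded[where B=1])
    show "?g S S' \<in> borel_measurable Cube"
      using sets_revealed_Collect(4)[of S] sets_revealed_Collect(4)[of S'] \<S>(2)[OF that(1)] \<S>(2)[OF that(2)]
      by (intro borel_measurable_times borel_measurable_walsh borel_measurable_indicator) auto
    show "\<bar>?g S S' \<omega>\<bar> \<le> 1" for \<omega>
      using abs_walsh_le[of S \<omega>] abs_walsh_le[of S' \<omega>] by (simp add: abs_mult indicator_def mult_le_one)
  qed
  then have "(\<integral>\<omega>. (\<Sum>S\<in>\<S>. \<Sum>S'\<in>\<S>. a S * a S' * ?g S S' \<omega>) \<partial>Cube)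
      = (\<Sum>S\<in>\<S>. \<Sum>S'\<in>\<S>. a S * a S' * (\<integral>\<omega>. ?g S S' \<omega> \<partial>Cube))"
    by (simp add: Bochner_Integration.integral_sum Bochner_Integration.integrable_sum)
  also have "\<dots> = (\<Sum>S\<in>\<S>. \<Sum>S'\<in>\<S>. if S = S' then a S ^ 2 * measure Cube {\<omega>. S \<inter> J \<omega> \<noteq> {}} else 0)"
    using \<S>(2) by (intro sum.cong refl) (simp add: integral_walsh_walsh_hit power2_eq_square)
  also have "\<dots> = (\<Sum>S\<in>\<S>. a S ^ 2 * measure Cube {\<omega>. S \<inter> J \<omega> \<noteq> {}})"
    using \<S>(1) by simp
  moreover have "hit_sum a \<S> \<omega> ^ 2 = (\<Sum>S\<in>\<S>. \<Sum>S'\<in>\<S>. a S * a S' * ?g S S' \<omega>)" for \<omega>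
    unfolding hit_sum_def power2_eq_square sum_product by (intro sum.cong refl) (simp only: mult_ac)
  ultimately show ?thesis
    by simp
qed

theorem schramm_steif_revealed:
  assumes \<S>: "finite \<S>" "\<And>S. S \<in> \<S> \<Longrightarrow> finite S \<and> card S = k" "k > 0"
    and f: "f \<in> borel_measurable Cube" "\<And>\<omega>. \<bar>f \<omega>\<bar> \<le> 1" "flip_stable f"
  shows "(\<Sum>S\<in>\<S>. walsh_coeff f S ^ 2) ^ 2
    \<le> (\<Sum>S\<in>\<S>. walsh_coeff f S ^ 2 * measure Cube {\<omega>. S \<inter> J \<omega> \<noteq> {}})"
proof -
  define u where "u = hit_sum (walsh_coeff f) \<S>"
  define C where "C = (\<Sum>S\<in>\<S>. \<bar>walsh_coeff f S\<bar>)"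
  have u: "u \<in> borel_measurable Cube" "\<And>\<omega>. \<bar>u \<omega>\<bar> \<le> C"
    unfolding u_def C_def using hit_sum_bounds \<S>(2) by auto
  have fu_le: "\<bar>f \<omega> * u \<omega>\<bar> \<le> \<bar>u \<omega>\<bar>" for \<omega>
    using f(2)[of \<omega>] by (simp add: abs_mult mult_left_le_one_le)
  have "\<bar>u \<omega>\<bar> ^ 2 \<le> C ^ 2" for \<omega>
    using u(2)[of \<omega>] by (intro power_mono) simp_all
  moreover have "\<bar>f \<omega> * u \<omega>\<bar> \<le> C" for \<omega>
    using order_trans[OF fu_le u(2)] .
  ultimately have int_u: "integrable Cube (\<lambda>\<omega>. \<bar>u \<omega>\<bar>)" "integrable Cube (\<lambda>\<omega>. \<bar>u \<omega>\<bar> ^ 2)"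
      "integrable Cube (\<lambda>\<omega>. f \<omega> * u \<omega>)"
    using u f(1) by (intro integrable_Cube_bounded[where B=C] integrable_Cube_bounded[where B="C ^ 2"]; simp)+
  have "(\<Sum>S\<in>\<S>. walsh_coeff f S ^ 2) = (\<integral>\<omega>. f \<omega> * u \<omega> \<partial>Cube)"
  proof -
    have "finite S \<and> S \<noteq> {}" if "S \<in> \<S>" for S
      using \<S>(2)[OF that] \<S>(3) by auto
    then show ?thesis
      using integral_mult_hit_sum[OF _ f, of \<S> "walsh_coeff f"] unfolding u_def
      by (simp add: power2_eq_square)
  qed
  also have "\<dots> \<le> (\<integral>\<omega>. \<bar>u \<omega>\<bar> \<partial>Cube)"
    using fu_le by (intro integral_mono[OF int_u(3,1)]) (simp add: abs_le_iff)
  finally have "(\<Sum>S\<in>\<S>. walsh_coeff f S ^ 2) ^ 2 \<le> (\<integral>\<omega>. \<bar>u \<omega>\<bar> \<partial>Cube) ^ 2"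
    by (intro power_mono) (auto intro: sum_nonneg)
  also have "\<dots> \<le> (\<integral>\<omega>. u \<omega> ^ 2 \<partial>Cube)"
    using cube.square_expectation_le[OF int_u(1,2)] by simp
  finally show ?thesis
    using integral_hit_sum_square[OF \<S>(1,2)] by (simp add: u_def)
qed

end

section \<open>Witness sets and query algorithms\<close>

lemma witness_mono: "witness f W \<omega> \<Longrightarrow> W \<subseteq> W' \<Longrightarrow> witness f W' \<omega>"
  unfolding witness_def by blast

lemma witness_iff_AE:
  assumes f: "f \<in> borel_measurable Cube" and W: "finite W"
  shows "witness f W \<omega> \<longleftrightarrow> (AE \<omega>' in Cube. \<omega>' \<in> cylinder W \<omega> \<longrightarrow> f \<omega>' = f \<omega>)"
proof
  assume "witness f W \<omega>"
  then obtain A where A: "A \<in> sets Cube" "measure Cube A = 1"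
    "\<forall>\<omega>'\<in>A. \<omega>' \<in> cylinder W \<omega> \<longrightarrow> f \<omega>' = f \<omega>"
    unfolding witness_def cylinder_def by blast
  show "AE \<omega>' in Cube. \<omega>' \<in> cylinder W \<omega> \<longrightarrow> f \<omega>' = f \<omega>"
    using cube.AE_prob_1[OF A(2)] by eventually_elim (use A(3) in auto)
next
  assume ae: "AE \<omega>' in Cube. \<omega>' \<in> cylinder W \<omega> \<longrightarrow> f \<omega>' = f \<omega>"
  define A where "A = (UNIV - cylinder W \<omega>) \<union> (f -` {f \<omega>} \<inter> space Cube)"
  have A: "A \<in> sets Cube"
    unfolding A_def using W measurable_sets[OF f, of "{f \<omega>}"]
    by (intro sets.Un sets_Cube_Diff_UNIV sets_cylinder) auto
  moreover have "measure Cube A = 1"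
    using cube.prob_eq_1[OF A] ae unfolding A_def by simp
  ultimately show "witness f W \<omega>"
    unfolding witness_def A_def cylinder_def by auto
qed

lemma witness_if_not_sign:
  assumes "finite W" "\<not> (\<forall>i\<in>W. \<omega> i \<in> {-1, 1})"
  shows "witness f W \<omega>"
proof -
  have "measure Cube (UNIV - cylinder W \<omega>) = 1"
    using cube.prob_compl[OF sets_cylinder[OF assms(1)]] assms by (simp add: measure_cylinder)
  moreover have "UNIV - cylinder W \<omega> \<in> sets Cube"
    using assms(1) by auto
  moreover have "\<forall>\<omega>'\<in>UNIV - cylinder W \<omega>. (\<forall>i\<in>W. \<omega>' i = \<omega> i) \<longrightarrow> f \<omega>' = f \<omega>"
    by (auto simp: cylinder_def)
  ultimately show ?thesis
    unfolding witness_def by blast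
qed

definition ae_const_on_cylinder :: "((nat \<Rightarrow> real) \<Rightarrow> real) \<Rightarrow> nat set \<Rightarrow> (nat \<Rightarrow> real) \<Rightarrow> bool" where
  "ae_const_on_cylinder f W \<omega> \<longleftrightarrow> (\<exists>c. AE \<omega>' in Cube. \<omega>' \<in> cylinder W \<omega> \<longrightarrow> f \<omega>' = c)"

lemma ae_const_on_cylinder_restrict [simp]:
  "ae_const_on_cylinder f W (restrict \<omega> W) = ae_const_on_cylinder f W \<omega>"
  by (simp add: ae_const_on_cylinder_def)

lemma ae_const_on_cylinder_flip:
  "i \<notin> W \<Longrightarrow> ae_const_on_cylinder f W (flip i \<omega>) = ae_const_on_cylinder f W \<omega>"
  by (simp add: ae_const_on_cylinder_def cylinder_flip)

text \<open>
  Being a witness set involves the value \<open>f \<omega>\<close>, which the bits in \<open>W\<close> do not determine;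
  almost surely it is equivalent to the a.e.\ constancy of \<open>f\<close> on the cylinder, which they do:
  on each of the finitely many cylinders over \<open>W\<close>, only a null set deviates from the a.e.\ value.
\<close>

lemma AE_witness_iff_ae_const_on_cylinder:
  assumes f: "f \<in> borel_measurable Cube" and W: "finite W"
  shows "AE \<omega> in Cube. witness f W \<omega> \<longleftrightarrow> ae_const_on_cylinder f W \<omega>"
proof -
  define P where "P = Pi\<^sub>E W (\<lambda>_. {-1, 1::real})"
  define c where "c x = (SOME c. AE \<omega>' in Cube. \<omega>' \<in> cylinder W x \<longrightarrow> f \<omega>' = c)" for x
  have c: "AE \<omega>' in Cube. \<omega>' \<in> cylinder W x \<longrightarrow> f \<omega>' = c x" if "ae_const_on_cylinder f W x" for x
    using that unfolding ae_const_on_cylinder_def c_def by (rule someI_ex)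
  have "AE \<omega> in Cube. \<forall>x\<in>P. ae_const_on_cylinder f W x \<longrightarrow> \<omega> \<in> cylinder W x \<longrightarrow> f \<omega> = c x"
    using W c unfolding P_def by (intro AE_finite_allI) (auto intro!: finite_PiE)
  then show ?thesis
    using AE_Cube_sign
  proof eventually_elim
    case (elim \<omega>)
    have sign: "restrict \<omega> W \<in> P"
      using elim(2) by (auto simp: P_def)
    show ?case
    proof
      assume "witness f W \<omega>"
      then show "ae_const_on_cylinder f W \<omega>"
        using witness_iff_AE[OF f W] unfolding ae_const_on_cylinder_def by blast
    next
      assume const: "ae_const_on_cylinder f W \<omega>"
      have "f \<omega> = c (restrict \<omega> W)"
        by (rule elim(1)[rule_format, OF sign]) (simp_all add: const cylinder_def)
      then show "witness f W \<omega>"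
        using c[of "restrict \<omega> W"] const witness_iff_AE[OF f W] by simp
    qed
  qed
qed

lemma AE_witness_iff_ae_const_on_cylinder_all:
  assumes "f \<in> borel_measurable Cube"
  shows "AE \<omega> in Cube. \<forall>W. finite W \<longrightarrow> (witness f W \<omega> \<longleftrightarrow> ae_const_on_cylinder f W \<omega>)"
proof -
  have "AE \<omega> in Cube. \<forall>W\<in>{W. finite W}. witness f W \<omega> \<longleftrightarrow> ae_const_on_cylinder f W \<omega>"
    using AE_witness_iff_ae_const_on_cylinder[OF assms]
    by (subst AE_ball_countable) (auto intro: countable_Collect_finite)
  then show ?thesis
    by simp
qed

lemma witness_flip_eq:
  assumes f: "f \<in> borel_measurable Cube" and W: "finite W" "i \<notin> W"
    and sign: "\<forall>j\<in>W. \<omega> j \<in> {-1, 1}"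
    and "witness f W \<omega>" "witness f W (flip i \<omega>)"
  shows "f (flip i \<omega>) = f \<omega>"
proof (rule AE_cylinder_const_unique[OF W(1) sign])
  show "AE \<omega>' in Cube. \<omega>' \<in> cylinder W \<omega> \<longrightarrow> f \<omega>' = f \<omega>"
    using assms(5) witness_iff_AE[OF f W(1)] by simp
  show "AE \<omega>' in Cube. \<omega>' \<in> cylinder W \<omega> \<longrightarrow> f \<omega>' = f (flip i \<omega>)"
    using assms(6) witness_iff_AE[OF f W(1)] cylinder_flip[OF W(2)] by simp
qed

lemma sets_vimage_ae_values_on_cylinder:
  fixes f :: "(nat \<Rightarrow> real) \<Rightarrow> real"
  assumes f: "f \<in> borel_measurable Cube" and x: "finite W" "\<forall>i\<in>W. x i \<in> {-1, 1}"
  shows "f -` {c. AE \<omega>' in Cube. \<omega>' \<in> cylinder W x \<longrightarrow> f \<omega>' = c} \<in> sets Cube"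
proof (cases "\<exists>c. AE \<omega>' in Cube. \<omega>' \<in> cylinder W x \<longrightarrow> f \<omega>' = c")
  case True
  then obtain c where c: "AE \<omega>' in Cube. \<omega>' \<in> cylinder W x \<longrightarrow> f \<omega>' = c"
    by blast
  then have "{c. AE \<omega>' in Cube. \<omega>' \<in> cylinder W x \<longrightarrow> f \<omega>' = c} = {c}"
    using AE_cylinder_const_unique[OF x, of f _ c] by blast
  moreover have "f -` {c} \<inter> space Cube \<in> sets Cube"
    by (rule measurable_sets[OF f]) simp
  ultimately show ?thesis
    by simp
qed simp

lemma sets_Collect_not_sign: "finite W \<Longrightarrow> {\<omega>. \<not> (\<forall>j\<in>W. \<omega> j \<in> {-1, 1})} \<in> sets Cube"
proof -
  assume "finite W"
  have "{\<omega>. \<not> (\<forall>j\<in>W. \<omega> j \<in> {-1, 1})} = (\<Union>j\<in>W. UNIV - {\<omega>. \<omega> j \<in> {-1, 1}})"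
    by blast
  also have "\<dots> \<in> sets Cube"
    using \<open>finite W\<close> by (intro sets.finite_UN sets_Cube_Diff_UNIV sets_Collect_coord)
  finally show ?thesis .
qed

text \<open>
  Off a null set of non-sign vectors, \<open>\<omega>\<close> is a witness iff \<open>f \<omega>\<close> is the almost sure value of \<open>f\<close>
  on the cylinder of \<open>\<omega>\<close>, and there are only finitely many such cylinders.
\<close>

lemma sets_witness:
  assumes f: "f \<in> borel_measurable Cube" and W: "finite W"
  shows "{\<omega>. witness f W \<omega>} \<in> sets Cube"
proof -
  define P where "P = Pi\<^sub>E W (\<lambda>_. {-1, 1::real})"
  define N where "N = {\<omega>::nat \<Rightarrow> real. \<not> (\<forall>j\<in>W. \<omega> j \<in> {-1, 1})}"
  define V where "V x = f -` {c. AE \<omega>' in Cube. \<omega>' \<in> cylinder W x \<longrightarrow> f \<omega>' = c}" for x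
  have "{\<omega>. witness f W \<omega>} \<subseteq> N \<union> (\<Union>x\<in>P. cylinder W x \<inter> V x)"
  proof
    fix \<omega> assume w: "\<omega> \<in> {\<omega>. witness f W \<omega>}"
    show "\<omega> \<in> N \<union> (\<Union>x\<in>P. cylinder W x \<inter> V x)"
    proof (cases "\<omega> \<in> N")
      case False
      then have "restrict \<omega> W \<in> P"
        by (auto simp: N_def P_def)
      moreover have "\<omega> \<in> cylinder W (restrict \<omega> W) \<inter> V (restrict \<omega> W)"
        using w witness_iff_AE[OF f W] by (simp add: V_def cylinder_def)
      ultimately show ?thesis
        by blast
    qed simp
  qed
  moreover have "N \<union> (\<Union>x\<in>P. cylinder W x \<inter> V x) \<subseteq> {\<omega>. witness f W \<omega>}"
  proof
    fix \<omega> assume "\<omega> \<in> N \<union> (\<Union>x\<in>P. cylinder W x \<inter> V x)"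
    then consider "\<omega> \<in> N" | x where "\<omega> \<in> cylinder W x" "\<omega> \<in> V x"
      by blast
    then show "\<omega> \<in> {\<omega>. witness f W \<omega>}"
    proof cases
      case (2 x)
      then have "cylinder W x = cylinder W \<omega>"
        by (auto simp: cylinder_def)
      then show ?thesis
        using 2 witness_iff_AE[OF f W] by (simp add: V_def)
    qed (use witness_if_not_sign[OF W] in \<open>simp add: N_def\<close>)
  qed
  moreover have "N \<union> (\<Union>x\<in>P. cylinder W x \<inter> V x) \<in> sets Cube"
    unfolding N_def V_def P_def using W f
    by (intro sets.Un sets_Collect_not_sign sets.finite_UN sets.Int sets_cylinder
        sets_vimage_ae_values_on_cylinder) (auto simp: finite_PiE)
  ultimately show ?thesis
    by (metis subset_antisym)
qed

lemma queried_Suc: "queried q \<rho> \<omega> (Suc k) = insert (q \<rho> (hist q \<rho> \<omega> k)) (queried q \<rho> \<omega> k)"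
  by (auto simp: queried_def)

lemma finite_queried [simp]: "finite (queried q \<rho> \<omega> k)"
  by (simp add: queried_def)

lemma queried_mono: "k \<le> k' \<Longrightarrow> queried q \<rho> \<omega> k \<subseteq> queried q \<rho> \<omega> k'"
  by (induction k' rule: dec_induct) (auto simp: queried_Suc)

lemma hist_flip: "i \<notin> queried q \<rho> \<omega> k \<Longrightarrow> hist q \<rho> (flip i \<omega>) k = hist q \<rho> \<omega> k"
  by (induction k) (auto simp: queried_Suc flip_apply)

lemma queried_flip: "i \<notin> queried q \<rho> \<omega> k \<Longrightarrow> queried q \<rho> (flip i \<omega>) k = queried q \<rho> \<omega> k"
  by (simp add: queried_def hist_flip)

lemma witness_alg_W: "\<exists>k. witness f (queried q \<rho> \<omega> k) \<omega> \<Longrightarrow> witness f (alg_W f q \<omega> \<rho>) \<omega>"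
  unfolding alg_W_def stop_time_def by (rule LeastI_ex)

text \<open>
  Flipping a bit the algorithm never reads does not change the run, and, since the witness
  property agrees with a property of the queried bits only, not the stopping time either.
\<close>

lemma alg_W_flip:
  assumes witness_iff: "\<And>W \<omega>'. \<omega>' \<in> {\<omega>, flip i \<omega>} \<Longrightarrow> finite W \<Longrightarrow>
      witness f W \<omega>' \<longleftrightarrow> ae_const_on_cylinder f W \<omega>'"
    and stops: "\<exists>k. witness f (queried q \<rho> \<omega> k) \<omega>"
    and i: "i \<notin> alg_W f q \<omega> \<rho>"
  shows "alg_W f q (flip i \<omega>) \<rho> = alg_W f q \<omega> \<rho>"
    and "witness f (alg_W f q \<omega> \<rho>) (flip i \<omega>)"
proof -
  define \<tau> where "\<tau> = stop_time f q \<omega> \<rho>"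
  have same_run: "queried q \<rho> (flip i \<omega>) k = queried q \<rho> \<omega> k
      \<and> (witness f (queried q \<rho> (flip i \<omega>) k) (flip i \<omega>) \<longleftrightarrow> witness f (queried q \<rho> \<omega> k) \<omega>)"
    if "k \<le> \<tau>" for k
  proof -
    have "i \<notin> queried q \<rho> \<omega> k"
      using queried_mono[OF that] i by (auto simp: alg_W_def \<tau>_def)
    then show ?thesis
      using witness_iff queried_flip ae_const_on_cylinder_flip by simp
  qed
  have "witness f (queried q \<rho> \<omega> \<tau>) \<omega>"
    using witness_alg_W[OF stops] by (simp add: alg_W_def \<tau>_def)
  then have witness_flip: "witness f (queried q \<rho> (flip i \<omega>) \<tau>) (flip i \<omega>)"
    using same_run[of \<tau>] by blast
  have "stop_time f q (flip i \<omega>) \<rho> = \<tau>"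
    unfolding stop_time_def
  proof (rule Least_equality)
    show "witness f (queried q \<rho> (flip i \<omega>) \<tau>) (flip i \<omega>)"
      by (rule witness_flip)
    show "\<tau> \<le> k" if "witness f (queried q \<rho> (flip i \<omega>) k) (flip i \<omega>)" for k
      using same_run[of k] that by (metis \<tau>_def Least_le nat_le_linear stop_time_def)
  qed
  then show "alg_W f q (flip i \<omega>) \<rho> = alg_W f q \<omega> \<rho>"
    using same_run[of \<tau>] by (simp add: alg_W_def \<tau>_def)
  show "witness f (alg_W f q \<omega> \<rho>) (flip i \<omega>)"
    using witness_flip same_run[of \<tau>] by (simp add: alg_W_def \<tau>_def)
qed

lemma AE_alg_W_flip:
  assumes f: "f \<in> borel_measurable Cube"
    and stops: "AE \<omega> in Cube. \<exists>k. witness f (queried q \<rho> \<omega> k) \<omega>"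
  shows "AE \<omega> in Cube. i \<notin> alg_W f q \<omega> \<rho> \<longrightarrow>
    alg_W f q (flip i \<omega>) \<rho> = alg_W f q \<omega> \<rho> \<and> f (flip i \<omega>) = f \<omega>"
  using AE_witness_iff_ae_const_on_cylinder_all[OF f] AE_flip[OF AE_witness_iff_ae_const_on_cylinder_all[OF f], of i]
    stops AE_Cube_sign
proof eventually_elim
  case (elim \<omega>)
  show ?case
  proof
    assume i: "i \<notin> alg_W f q \<omega> \<rho>"
    have witness_iff: "\<And>W \<omega>'. \<omega>' \<in> {\<omega>, flip i \<omega>} \<Longrightarrow> finite W \<Longrightarrow>
        witness f W \<omega>' \<longleftrightarrow> ae_const_on_cylinder f W \<omega>'"
      using elim(1,2) by auto
    have J: "alg_W f q (flip i \<omega>) \<rho> = alg_W f q \<omega> \<rho>"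
      by (rule alg_W_flip(1)[OF witness_iff elim(3) i])
    have "f (flip i \<omega>) = f \<omega>"
    proof (rule witness_flip_eq[OF f _ i])
      show "finite (alg_W f q \<omega> \<rho>)"
        by (simp add: alg_W_def)
      show "\<forall>j\<in>alg_W f q \<omega> \<rho>. \<omega> j \<in> {-1, 1}"
        using elim(4) by blast
    qed (use witness_alg_W[OF elim(3)] alg_W_flip(2)[OF witness_iff elim(3) i] in auto)
    with J show "alg_W f q (flip i \<omega>) \<rho> = alg_W f q \<omega> \<rho> \<and> f (flip i \<omega>) = f \<omega>"
      by simp
  qed
qed

interpretation cube2: pair_prob_space Cube Cube
  by unfold_locales

lemma space_pair_Cube [simp]: "space (Cube \<Otimes>\<^sub>M Cube) = UNIV"
  by (simp add: space_pair_measure)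

lemma AE_pair_Cube_snd_fst:
  assumes "AE p in Cube \<Otimes>\<^sub>M Cube. P p"
  shows "AE \<rho> in Cube. AE \<omega> in Cube. P (\<omega>, \<rho>)"
proof -
  have "AE p in distr (Cube \<Otimes>\<^sub>M Cube) (Cube \<Otimes>\<^sub>M Cube) (\<lambda>(x, y). (y, x)). P p"
    using assms cube2.distr_pair_swap by metis
  then have "AE p in Cube \<Otimes>\<^sub>M Cube. P ((\<lambda>(x, y). (y, x)) p)"
    by (rule AE_distrD[rotated]) (rule measurable_pair_swap')
  then show ?thesis
    using cube2.AE_pair by fastforce
qed

lemma sets_Pair_slice:
  assumes "X \<in> sets (Cube \<Otimes>\<^sub>M Cube)"
  shows "{\<omega>. (\<omega>, \<rho>) \<in> X} \<in> sets Cube"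
proof -
  have "(\<lambda>\<omega>. (\<omega>, \<rho>)) -` X \<inter> space Cube \<in> sets Cube"
    by (rule measurable_sets[OF measurable_Pair2' assms]) simp
  then show ?thesis
    by (simp add: vimage_def)
qed

lemma measure_pair_Cube_eq_integral:
  assumes X: "X \<in> sets (Cube \<Otimes>\<^sub>M Cube)"
  shows "integrable Cube (\<lambda>\<rho>. measure Cube {\<omega>. (\<omega>, \<rho>) \<in> X})"
    and "measure (Cube \<Otimes>\<^sub>M Cube) X = (\<integral>\<rho>. measure Cube {\<omega>. (\<omega>, \<rho>) \<in> X} \<partial>Cube)"
proof -
  have slice: "(\<lambda>x. (x, \<rho>)) -` X = {\<omega>. (\<omega>, \<rho>) \<in> X}" for \<rho>
    by auto
  have "(\<lambda>\<rho>. emeasure Cube {\<omega>. (\<omega>, \<rho>) \<in> X}) \<in> borel_measurable Cube"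
    using cube2.measurable_emeasure_Pair2[OF X] by (simp add: slice)
  then have meas: "(\<lambda>\<rho>. measure Cube {\<omega>. (\<omega>, \<rho>) \<in> X}) \<in> borel_measurable Cube"
    by (simp add: cube.emeasure_eq_measure)
  then show "integrable Cube (\<lambda>\<rho>. measure Cube {\<omega>. (\<omega>, \<rho>) \<in> X})"
    by (rule integrable_Cube_bounded[where B=1]) simp
  have "emeasure (Cube \<Otimes>\<^sub>M Cube) X = (\<integral>\<^sup>+\<rho>. emeasure Cube {\<omega>. (\<omega>, \<rho>) \<in> X} \<partial>Cube)"
    using cube2.emeasure_pair_measure_alt2[OF X] by (simp add: slice)
  then show "measure (Cube \<Otimes>\<^sub>M Cube) X = (\<integral>\<rho>. measure Cube {\<omega>. (\<omega>, \<rho>) \<in> X} \<partial>Cube)"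
    unfolding measure_def using meas
    by (simp add: cube.emeasure_eq_measure enn2real_nn_integral_eq_integral)
qed

lemma revealed_set_alg_W:
  assumes q: "valid_alg f q" and f: "f \<in> borel_measurable Cube"
    and stops: "AE \<omega> in Cube. \<exists>k. witness f (queried q \<rho> \<omega> k) \<omega>"
  shows "revealed_set (\<lambda>\<omega>. alg_W f q \<omega> \<rho>)"
proof
  fix i
  show "{\<omega>. i \<in> alg_W f q \<omega> \<rho>} \<in> sets Cube"
    using q sets_Pair_slice[of "{p. i \<in> alg_W f q (fst p) (snd p)}" \<rho>]
    by (simp add: valid_alg_def)
  show "AE \<omega> in Cube. i \<notin> alg_W f q \<omega> \<rho> \<longrightarrow> alg_W f q (flip i \<omega>) \<rho> = alg_W f q \<omega> \<rho>"
    using AE_alg_W_flip[OF f stops, of i] by (auto elim: eventually_mono)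
qed

lemma reveal_prob_eq_integral:
  assumes "valid_alg f q"
  shows "integrable Cube (\<lambda>\<rho>. measure Cube {\<omega>. i \<in> alg_W f q \<omega> \<rho>})"
    and "reveal_prob f q i = (\<integral>\<rho>. measure Cube {\<omega>. i \<in> alg_W f q \<omega> \<rho>} \<partial>Cube)"
  using measure_pair_Cube_eq_integral[of "{p. i \<in> alg_W f q (fst p) (snd p)}"] assms
  by (simp_all add: valid_alg_def reveal_prob_def)

lemma schramm_steif_alg_W:
  assumes f: "boolean_fun f" and q: "valid_alg f q"
    and \<S>: "finite \<S>" "\<And>S. S \<in> \<S> \<Longrightarrow> finite S \<and> card S = k" "k > 0"
    and stops: "AE \<omega> in Cube. \<exists>k. witness f (queried q \<rho> \<omega> k) \<omega>"
  shows "(\<Sum>S\<in>\<S>. walsh_coeff f S ^ 2) ^ 2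
    \<le> (\<Sum>S\<in>\<S>. walsh_coeff f S ^ 2 * (\<Sum>i\<in>S. measure Cube {\<omega>. i \<in> alg_W f q \<omega> \<rho>}))"
proof -
  note f_meas = boolean_funD(1)[OF f] and f_bound = boolean_funD(2)[OF f]
  interpret revealed_set "\<lambda>\<omega>. alg_W f q \<omega> \<rho>"
    by (rule revealed_set_alg_W[OF q f_meas stops])
  have "flip_stable f"
    unfolding flip_stable_def by (intro allI eventually_mono[OF AE_alg_W_flip[OF f_meas stops]]) auto
  then have "(\<Sum>S\<in>\<S>. walsh_coeff f S ^ 2) ^ 2
      \<le> (\<Sum>S\<in>\<S>. walsh_coeff f S ^ 2 * measure Cube {\<omega>. S \<inter> alg_W f q \<omega> \<rho> \<noteq> {}})"
    using schramm_steif_revealed[OF \<S> f_meas f_bound] by simp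
  also have "\<dots> \<le> (\<Sum>S\<in>\<S>. walsh_coeff f S ^ 2 * (\<Sum>i\<in>S. measure Cube {\<omega>. i \<in> alg_W f q \<omega> \<rho>}))"
  proof (intro sum_mono mult_left_mono)
    fix S assume "S \<in> \<S>"
    have "{\<omega>. S \<inter> alg_W f q \<omega> \<rho> \<noteq> {}} = (\<Union>i\<in>S. {\<omega>. i \<in> alg_W f q \<omega> \<rho>})"
      by auto
    then show "measure Cube {\<omega>. S \<inter> alg_W f q \<omega> \<rho> \<noteq> {}} \<le> (\<Sum>i\<in>S. measure Cube {\<omega>. i \<in> alg_W f q \<omega> \<rho>})"
      using \<S>(2)[OF \<open>S \<in> \<S>\<close>] sets_revealed
      by (simp add: cube.finite_measure_subadditive_finite image_subset_iff)
  qed simp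
  finally show ?thesis .
qed

lemma sum_walsh_coeff_square_le_reveal_prob:
  assumes f: "boolean_fun f" and q: "valid_alg f q"
    and \<S>: "finite \<S>" "\<And>S. S \<in> \<S> \<Longrightarrow> finite S \<and> card S = k" "k > 0"
  shows "(\<Sum>S\<in>\<S>. walsh_coeff f S ^ 2) ^ 2 \<le> (\<Sum>S\<in>\<S>. walsh_coeff f S ^ 2 * (\<Sum>i\<in>S. reveal_prob f q i))"
proof -
  let ?p = "\<lambda>\<rho> i. measure Cube {\<omega>. i \<in> alg_W f q \<omega> \<rho>}"
  have "AE p in Cube \<Otimes>\<^sub>M Cube. \<exists>k. witness f (queried q (snd p) (fst p) k) (fst p)"
    using q by (simp add: valid_alg_def)
  then have stops: "AE \<rho> in Cube. AE \<omega> in Cube. \<exists>k. witness f (queried q \<rho> \<omega> k) \<omega>"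
    using AE_pair_Cube_snd_fst by fastforce
  have "(\<integral>\<rho>. (\<Sum>S\<in>\<S>. walsh_coeff f S ^ 2) ^ 2 \<partial>Cube)
      \<le> (\<integral>\<rho>. (\<Sum>S\<in>\<S>. walsh_coeff f S ^ 2 * (\<Sum>i\<in>S. ?p \<rho> i)) \<partial>Cube)"
  proof (rule integral_mono_AE)
    show "integrable Cube (\<lambda>\<rho>. (\<Sum>S\<in>\<S>. walsh_coeff f S ^ 2 * (\<Sum>i\<in>S. ?p \<rho> i)))"
      using reveal_prob_eq_integral(1)[OF q]
      by (intro Bochner_Integration.integrable_sum integrable_mult_right) auto
    show "AE \<rho> in Cube. (\<Sum>S\<in>\<S>. walsh_coeff f S ^ 2) ^ 2 \<le> (\<Sum>S\<in>\<S>. walsh_coeff f S ^ 2 * (\<Sum>i\<in>S. ?p \<rho> i))"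
      using stops by eventually_elim (rule schramm_steif_alg_W[OF f q \<S>])
  qed simp
  also have "\<dots> = (\<Sum>S\<in>\<S>. walsh_coeff f S ^ 2 * (\<Sum>i\<in>S. reveal_prob f q i))"
    using reveal_prob_eq_integral[OF q] by (simp add: Bochner_Integration.integral_sum)
  finally show ?thesis
    using cube.prob_space by simp
qed

lemma reveal_prob_le_SUP: "reveal_prob f q i \<le> (SUP i. reveal_prob f q i)"
  by (rule cSUP_upper) (auto intro!: bdd_aboveI[where M=1] simp: reveal_prob_def cube2.prob_le_1)

lemma sum_walsh_coeff_square_le_SUP_reveal_prob:
  assumes f: "boolean_fun f" and q: "valid_alg f q"
    and \<S>: "finite \<S>" "\<And>S. S \<in> \<S> \<Longrightarrow> finite S \<and> card S = k" "k > 0"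
  shows "(\<Sum>S\<in>\<S>. walsh_coeff f S ^ 2) \<le> real k * (SUP i. reveal_prob f q i)"
proof -
  define A where "A = (\<Sum>S\<in>\<S>. walsh_coeff f S ^ 2)"
  define \<delta> where "\<delta> = (SUP i. reveal_prob f q i)"
  have "\<delta> \<ge> 0"
    using reveal_prob_le_SUP[of f q 0] by (simp add: \<delta>_def reveal_prob_def order.trans[rotated])
  have "A ^ 2 \<le> (\<Sum>S\<in>\<S>. walsh_coeff f S ^ 2 * (\<Sum>i\<in>S. reveal_prob f q i))"
    unfolding A_def by (rule sum_walsh_coeff_square_le_reveal_prob[OF f q \<S>])
  also have "\<dots> \<le> (\<Sum>S\<in>\<S>. walsh_coeff f S ^ 2 * (real k * \<delta>))"
  proof (intro sum_mono mult_left_mono)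
    fix S assume "S \<in> \<S>"
    then show "(\<Sum>i\<in>S. reveal_prob f q i) \<le> real k * \<delta>"
      using sum_mono[of S "reveal_prob f q" "\<lambda>_. \<delta>"] reveal_prob_le_SUP[of f q] \<S>(2)
      by (simp add: \<delta>_def)
  qed simp
  also have "\<dots> = A * (real k * \<delta>)"
    by (simp add: A_def sum_distrib_right)
  finally have "A * A \<le> A * (real k * \<delta>)"
    by (simp add: power2_eq_square)
  moreover have "A \<ge> 0"
    by (simp add: A_def sum_nonneg)
  ultimately have "A \<le> real k * \<delta>"
    using \<open>\<delta> \<ge> 0\<close> by (cases "A = 0") (simp_all add: mult_le_cancel_left_pos)
  then show ?thesis
    by (simp add: A_def \<delta>_def)
qed

definition sequential_query :: "(nat \<Rightarrow> real) \<Rightarrow> (nat \<times> real) list \<Rightarrow> nat" where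
  "sequential_query \<rho> h = length h"

lemma queried_sequential_query: "queried sequential_query \<rho> \<omega> k = {..<k}"
proof -
  have "hist sequential_query \<rho> \<omega> k = map (\<lambda>j. (j, \<omega> j)) [0..<k]"
    by (induction k) (auto simp: sequential_query_def)
  then show ?thesis
    by (auto simp: queried_def image_iff)
qed

lemma valid_alg_sequential_query:
  assumes f: "boolean_fun f" and fin: "finitary f"
  shows "valid_alg f sequential_query"
  unfolding valid_alg_def
proof (intro conjI allI)
  note f_meas = boolean_funD(1)[OF f]
  show "(\<lambda>\<rho>. sequential_query \<rho> h) \<in> Cube \<rightarrow>\<^sub>M count_space UNIV" for h
    by (simp add: sequential_query_def)
  have "AE \<omega> in Cube. \<exists>k. witness f {..<k} \<omega>"
    using fin unfolding finitary_def
  proof eventually_elim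
    case (elim \<omega>)
    then obtain W k where "witness f W \<omega>" "W \<subseteq> {..<k}"
      using finite_nat_bounded by blast
    then show ?case
      using witness_mono by blast
  qed
  then have "AE p in distr (Cube \<Otimes>\<^sub>M Cube) Cube fst. \<exists>k. witness f {..<k} p"
    unfolding cube.distr_pair_fst .
  then have "AE p in Cube \<Otimes>\<^sub>M Cube. \<exists>k. witness f {..<k} (fst p)"
    by (rule AE_distrD[rotated]) simp
  then show "AE p in Cube \<Otimes>\<^sub>M Cube. \<exists>k. witness f (queried sequential_query (snd p) (fst p) k) (fst p)"
    by (simp add: queried_sequential_query)
  fix i
  have "(\<lambda>\<omega>. LEAST k. witness f {..<k} \<omega>) \<in> Cube \<rightarrow>\<^sub>M count_space UNIV"
    using sets_witness[OF f_meas] by (intro measurable_Least) (simp add: pred_def)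
  then have "(\<lambda>p. LEAST k. witness f {..<k} (fst p)) \<in> Cube \<Otimes>\<^sub>M Cube \<rightarrow>\<^sub>M count_space UNIV"
    by (rule measurable_compose[OF measurable_fst])
  then have "(\<lambda>p. LEAST k. witness f {..<k} (fst p)) -` {i<..} \<inter> space (Cube \<Otimes>\<^sub>M Cube)
      \<in> sets (Cube \<Otimes>\<^sub>M Cube)"
    by (rule measurable_sets) simp
  moreover have "{p \<in> space (Cube \<Otimes>\<^sub>M Cube). i \<in> alg_W f sequential_query (fst p) (snd p)}
      = (\<lambda>p. LEAST k. witness f {..<k} (fst p)) -` {i<..} \<inter> space (Cube \<Otimes>\<^sub>M Cube)"
    by (auto simp: alg_W_def stop_time_def queried_sequential_query)
  ultimately show "{p \<in> space (Cube \<Otimes>\<^sub>M Cube). i \<in> alg_W f sequential_query (fst p) (snd p)}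
      \<in> sets (Cube \<Otimes>\<^sub>M Cube)"
    by simp
qed

lemma sum_walsh_coeff_square_le_revealment:
  assumes f: "boolean_fun f" "finitary f"
    and \<S>: "finite \<S>" "\<And>S. S \<in> \<S> \<Longrightarrow> finite S \<and> card S = k" "k > 0"
  shows "(\<Sum>S\<in>\<S>. walsh_coeff f S ^ 2) \<le> real k * revealment f"
proof -
  have "(\<Sum>S\<in>\<S>. walsh_coeff f S ^ 2) / real k \<le> revealment f"
    unfolding revealment_def
  proof (rule cINF_greatest)
    show "{q. valid_alg f q} \<noteq> {}"
      using valid_alg_sequential_query[OF f] by auto
    show "(\<Sum>S\<in>\<S>. walsh_coeff f S ^ 2) / real k \<le> (SUP i. reveal_prob f q i)"
      if "q \<in> {q. valid_alg f q}" for q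
      using sum_walsh_coeff_square_le_SUP_reveal_prob[OF f(1) _ \<S>, of q] that \<S>(3)
      by (simp add: field_simps)
  qed
  then show ?thesis
    using \<S>(3) by (simp add: field_simps)
qed

lemma revealment_nonneg: "boolean_fun f \<Longrightarrow> finitary f \<Longrightarrow> 0 \<le> revealment f"
  using sum_walsh_coeff_square_le_revealment[of f "{}" 1] by simp

section \<open>Noise\<close>

lemma map_fst_noise_pmf: "map_pmf fst (noise_pmf \<epsilon>) = pmf_of_set {-1, 1}"
  unfolding noise_pmf_def by (simp add: map_bind_pmf bind_return_pmf')

lemma map_snd_noise_pmf: "map_pmf snd (noise_pmf \<epsilon>) = pmf_of_set {-1, 1}"
proof -
  let ?U = "pmf_of_set {-1, 1::real}"
  have "map_pmf snd (noise_pmf \<epsilon>)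
      = do { x \<leftarrow> ?U; r \<leftarrow> bernoulli_pmf \<epsilon>; z \<leftarrow> ?U; return_pmf (if r then z else x) }"
    unfolding noise_pmf_def by (simp add: map_bind_pmf)
  also have "\<dots> = do { r \<leftarrow> bernoulli_pmf \<epsilon>; x \<leftarrow> ?U; z \<leftarrow> ?U; return_pmf (if r then z else x) }"
    by (rule bind_commute_pmf)
  also have "\<dots> = do { r \<leftarrow> bernoulli_pmf \<epsilon>; ?U }"
  proof (intro bind_pmf_cong refl)
    fix r :: bool
    show "do { x \<leftarrow> ?U; z \<leftarrow> ?U; return_pmf (if r then z else x) } = ?U"
      by (cases r) (simp_all add: bind_return_pmf')
  qed
  finally show ?thesis
    by simp
qed

lemma pmf_noise_pmf:
  assumes "0 \<le> \<epsilon>" "\<epsilon> \<le> 1" "a \<in> {-1, 1}" "b \<in> {-1, 1}"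
  shows "pmf (noise_pmf \<epsilon>) (a, b) = (1 + (1 - \<epsilon>) * a * b) / 4"
  using assms unfolding noise_pmf_def
  by (auto simp: pmf_bind integral_pmf_of_set indicator_def field_simps)

lemma space_NoiseCube [simp]: "space (NoiseCube \<epsilon>) = UNIV"
  by (simp add: NoiseCube_def space_PiM)

lemma prob_space_NoiseCube: "prob_space (NoiseCube \<epsilon>)"
  unfolding NoiseCube_def by (rule prob_space_PiM) (simp add: prob_space_measure_pmf)

lemma measurable_NoiseCube_coords: "(\<lambda>p i. g (p i)) \<in> NoiseCube \<epsilon> \<rightarrow>\<^sub>M Cube"
  unfolding NoiseCube_def Cube_def
proof (rule measurable_PiM_single')
  fix i
  have "g \<in> measure_pmf (noise_pmf \<epsilon>) \<rightarrow>\<^sub>M coin"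
    by (simp add: measurable_def)
  then show "(\<lambda>p. g (p i)) \<in> PiM UNIV (\<lambda>_. measure_pmf (noise_pmf \<epsilon>)) \<rightarrow>\<^sub>M coin"
    by (rule measurable_compose[rotated]) simp
qed (simp add: space_PiM)

lemma distr_NoiseCube_coords:
  assumes "map_pmf g (noise_pmf \<epsilon>) = pmf_of_set {-1, 1}"
  shows "distr (NoiseCube \<epsilon>) Cube (\<lambda>p i. g (p i)) = Cube"
proof -
  have "distr (measure_pmf (noise_pmf \<epsilon>)) coin g = measure_pmf (map_pmf g (noise_pmf \<epsilon>))"
    unfolding map_pmf_rep_eq by (rule distr_cong) (simp_all add: coin_def)
  then have "distr (NoiseCube \<epsilon>) Cube (\<lambda>p. \<lambda>i\<in>UNIV. g (p i)) = Cube"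
    unfolding NoiseCube_def Cube_def using assms
    by (intro distr_PiM_componentwise) (auto simp: prob_space_measure_pmf measurable_def coin_def)
  moreover have "distr (NoiseCube \<epsilon>) Cube (\<lambda>p i. g (p i))
      = distr (NoiseCube \<epsilon>) Cube (\<lambda>p. \<lambda>i\<in>UNIV. g (p i))"
    by (rule distr_cong) auto
  ultimately show ?thesis
    by simp
qed

lemma AE_NoiseCube_coords:
  assumes "map_pmf g (noise_pmf \<epsilon>) = pmf_of_set {-1, 1}" "AE \<omega> in Cube. P \<omega>"
  shows "AE p in NoiseCube \<epsilon>. P (\<lambda>i. g (p i))"
proof -
  have "AE \<omega> in distr (NoiseCube \<epsilon>) Cube (\<lambda>p i. g (p i)). P \<omega>"
    unfolding distr_NoiseCube_coords[OF assms(1)] by (rule assms(2))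
  then show ?thesis
    by (rule AE_distrD[OF measurable_NoiseCube_coords])
qed

lemma measure_NoiseCube_cylinder:
  assumes "finite I"
  shows "measure (NoiseCube \<epsilon>) (cylinder I z) = (\<Prod>i\<in>I. pmf (noise_pmf \<epsilon>) (z i))"
proof -
  interpret noise: prob_space "NoiseCube \<epsilon>"
    by (rule prob_space_NoiseCube)
  have "emeasure (NoiseCube \<epsilon>) (cylinder I z) = (\<Prod>i\<in>I. emeasure (measure_pmf (noise_pmf \<epsilon>)) {z i})"
    unfolding cylinder_eq_prod_emb[where M="\<lambda>_. measure_pmf (noise_pmf \<epsilon>)", OF space_measure_pmf]
      NoiseCube_def
    using assms by (intro emeasure_PiM_emb) (auto simp: prob_space_measure_pmf)
  also have "\<dots> = ennreal (\<Prod>i\<in>I. pmf (noise_pmf \<epsilon>) (z i))"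
    by (simp add: emeasure_pmf_single prod_ennreal)
  finally show ?thesis
    by (simp add: noise.emeasure_eq_measure prod_nonneg)
qed

lemma sets_NoiseCube_cylinder: "finite I \<Longrightarrow> cylinder I z \<in> sets (NoiseCube \<epsilon>)"
  unfolding cylinder_eq_prod_emb[where M="\<lambda>_. measure_pmf (noise_pmf \<epsilon>)", OF space_measure_pmf]
    NoiseCube_def
  by (rule sets_PiM_I) auto

text \<open>
  \<open>prefix_avg f N\<close> is the conditional expectation of \<open>f\<close> given the first \<open>N\<close> bits. It makes the
  noise correlation a finite sum, and for finitary \<open>f\<close> it equals \<open>f\<close> almost surely for large \<open>N\<close>.
\<close>

definition sign_patterns :: "nat \<Rightarrow> (nat \<Rightarrow> real) set" where
  "sign_patterns N = Pi\<^sub>E {..<N} (\<lambda>_. {-1, 1})"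

definition cylinder_avg :: "((nat \<Rightarrow> real) \<Rightarrow> real) \<Rightarrow> nat \<Rightarrow> (nat \<Rightarrow> real) \<Rightarrow> real" where
  "cylinder_avg f N x = 2 ^ N * (\<integral>\<omega>. f \<omega> * indicator (cylinder {..<N} x) \<omega> \<partial>Cube)"

definition prefix_avg :: "((nat \<Rightarrow> real) \<Rightarrow> real) \<Rightarrow> nat \<Rightarrow> (nat \<Rightarrow> real) \<Rightarrow> real" where
  "prefix_avg f N \<omega> = (\<Sum>x\<in>sign_patterns N. cylinder_avg f N x * indicator (cylinder {..<N} x) \<omega>)"

lemma finite_sign_patterns [simp]: "finite (sign_patterns N)"
  by (simp add: sign_patterns_def finite_PiE)

lemma sign_patternsD: "x \<in> sign_patterns N \<Longrightarrow> \<forall>i\<in>{..<N}. x i \<in> {-1, 1}"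
  by (auto simp: sign_patterns_def)

lemma restrict_in_sign_patterns: "\<forall>i<N. \<omega> i \<in> {-1, 1} \<Longrightarrow> restrict \<omega> {..<N} \<in> sign_patterns N"
  by (simp add: sign_patterns_def restrict_PiE_iff)

lemma mem_cylinder_sign_patterns:
  "x \<in> sign_patterns N \<Longrightarrow> \<omega> \<in> cylinder {..<N} x \<longleftrightarrow> x = restrict \<omega> {..<N}"
  by (auto simp: sign_patterns_def cylinder_def PiE_iff extensional_def fun_eq_iff)

lemma sum_sign_patterns_indicator:
  "(\<Sum>x\<in>sign_patterns N. g x * indicator (cylinder {..<N} x) \<omega>)
    = (if \<forall>i<N. \<omega> i \<in> {-1, 1} then g (restrict \<omega> {..<N}) else (0::real))"
proof (cases "\<forall>i<N. \<omega> i \<in> {-1, 1}")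
  case True
  then show ?thesis
    using restrict_in_sign_patterns[OF True]
    by (simp add: indicator_def mem_cylinder_sign_patterns if_distrib sum.delta' cong: sum.cong)
next
  case False
  then have "\<omega> \<notin> cylinder {..<N} x" if "x \<in> sign_patterns N" for x
    using sign_patternsD[OF that] False by (fastforce simp: cylinder_def)
  then show ?thesis
    using False by auto
qed

lemma measure_cylinder_sign_patterns:
  "x \<in> sign_patterns N \<Longrightarrow> measure Cube (cylinder {..<N} x) = (1/2) ^ N"
  using sign_patternsD by (simp add: measure_cylinder)

lemma abs_cylinder_avg_le:
  assumes f: "f \<in> borel_measurable Cube" "\<And>\<omega>. \<bar>f \<omega>\<bar> \<le> 1" and x: "x \<in> sign_patterns N"
  shows "\<bar>cylinder_avg f N x\<bar> \<le> 1"
proof -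
  have "\<bar>\<integral>\<omega>. f \<omega> * indicator (cylinder {..<N} x) \<omega> \<partial>Cube\<bar>
      \<le> (\<integral>\<omega>. indicator (cylinder {..<N} x) \<omega> \<partial>Cube)"
  proof (rule order_trans[OF integral_abs_bound integral_mono])
    show "integrable Cube (\<lambda>\<omega>. \<bar>f \<omega> * indicator (cylinder {..<N} x) \<omega>\<bar>)"
      using f by (intro integrable_Cube_bounded[where B=1]) (auto simp: indicator_def)
    show "\<bar>f \<omega> * indicator (cylinder {..<N} x) \<omega>\<bar> \<le> indicator (cylinder {..<N} x) \<omega>" for \<omega>
      using f(2)[of \<omega>] by (auto simp: indicator_def)
    show "integrable Cube (indicator (cylinder {..<N} x) :: _ \<Rightarrow> real)"
      by (intro integrable_Cube_bounded[where B=1] borel_measurable_indicator sets_cylinder)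
        (auto simp: indicator_def)
  qed
  also have "\<dots> = (1/2) ^ N"
    using measure_cylinder_sign_patterns[OF x] by simp
  finally show ?thesis
    unfolding cylinder_avg_def by (simp add: abs_mult power_one_over field_simps)
qed

lemma borel_measurable_prefix_avg [measurable]: "prefix_avg f N \<in> borel_measurable Cube"
  unfolding prefix_avg_def by measurable

lemma abs_prefix_avg_le:
  "f \<in> borel_measurable Cube \<Longrightarrow> (\<And>\<omega>. \<bar>f \<omega>\<bar> \<le> 1) \<Longrightarrow> \<bar>prefix_avg f N \<omega>\<bar> \<le> 1"
  unfolding prefix_avg_def sum_sign_patterns_indicator
  using abs_cylinder_avg_le restrict_in_sign_patterns by auto

lemma AE_eventually_prefix_avg_eq:
  assumes f: "f \<in> borel_measurable Cube" and fin: "finitary f"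
  shows "AE \<omega> in Cube. eventually (\<lambda>N. prefix_avg f N \<omega> = f \<omega>) sequentially"
  using fin[unfolded finitary_def] AE_Cube_sign
proof eventually_elim
  case (elim \<omega>)
  then obtain W N0 where W: "finite W" "witness f W \<omega>" "W \<subseteq> {..<N0}"
    using finite_nat_bounded by blast
  have ae: "AE \<omega>' in Cube. \<omega>' \<in> cylinder W \<omega> \<longrightarrow> f \<omega>' = f \<omega>"
    using W witness_iff_AE[OF f W(1)] by simp
  show ?case
    unfolding eventually_sequentially
  proof (intro exI allI impI)
    fix N assume "N0 \<le> N"
    then have sub: "cylinder {..<N} \<omega> \<subseteq> cylinder W \<omega>"
      using W(3) by (auto simp: cylinder_def)
    have "(\<integral>\<omega>'. f \<omega>' * indicator (cylinder {..<N} \<omega>) \<omega>' \<partial>Cube)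
        = (\<integral>\<omega>'. f \<omega> * indicator (cylinder {..<N} \<omega>) \<omega>' \<partial>Cube)"
    proof (rule integral_cong_AE)
      show "AE \<omega>' in Cube. f \<omega>' * indicator (cylinder {..<N} \<omega>) \<omega>' = f \<omega> * indicator (cylinder {..<N} \<omega>) \<omega>'"
        using ae by eventually_elim (use sub in \<open>auto simp: indicator_def\<close>)
    qed (use f in measurable)
    also have "\<dots> = f \<omega> * (1/2) ^ N"
      using elim(2) by (simp add: measure_cylinder)
    finally show "prefix_avg f N \<omega> = f \<omega>"
      unfolding prefix_avg_def sum_sign_patterns_indicator cylinder_avg_def
      using elim(2) by (simp add: power_one_over)
  qed
qed

lemma walsh_coeff_eq_sum_sign_patterns:
  assumes f: "f \<in> borel_measurable Cube" "\<And>\<omega>. \<bar>f \<omega>\<bar> \<le> 1" and S: "S \<subseteq> {..<N}"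
  shows "walsh_coeff f S = (\<Sum>x\<in>sign_patterns N. (1/2) ^ N * cylinder_avg f N x * walsh S x)"
proof -
  have "walsh_coeff f S
      = (\<integral>\<omega>. (\<Sum>x\<in>sign_patterns N. walsh S x * (f \<omega> * indicator (cylinder {..<N} x) \<omega>)) \<partial>Cube)"
    unfolding walsh_coeff_def
  proof (rule integral_cong_AE)
    show "AE \<omega> in Cube. f \<omega> * walsh S \<omega>
        = (\<Sum>x\<in>sign_patterns N. walsh S x * (f \<omega> * indicator (cylinder {..<N} x) \<omega>))"
      using AE_Cube_sign
    proof eventually_elim
      case (elim \<omega>)
      have "walsh S (restrict \<omega> {..<N}) = walsh S \<omega>"
        unfolding walsh_def using S by (intro prod.cong) auto
      then show ?case
        using sum_sign_patterns_indicator[of "\<lambda>x. walsh S x * f \<omega>" N \<omega>] elim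
        by (simp add: mult.assoc)
    qed
  qed (use f in measurable)
  also have "\<dots> = (\<Sum>x\<in>sign_patterns N. walsh S x * (\<integral>\<omega>. f \<omega> * indicator (cylinder {..<N} x) \<omega> \<partial>Cube))"
    using f
    by (subst Bochner_Integration.integral_sum)
      (auto intro!: integrable_mult_right integrable_Cube_bounded[where B=1] simp: indicator_def)
  also have "\<dots> = (\<Sum>x\<in>sign_patterns N. (1/2) ^ N * cylinder_avg f N x * walsh S x)"
    by (intro sum.cong refl) (simp add: cylinder_avg_def power_one_over)
  finally show ?thesis .
qed

lemma indicator_cylinder_pair:
  "indicator (cylinder I x) (\<lambda>i. fst (p i)) * indicator (cylinder I y) (\<lambda>i. snd (p i))
    = (indicator (cylinder I (\<lambda>i. (x i, y i))) p :: real)"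
  by (auto simp: indicator_def cylinder_def prod_eq_iff)

lemma measure_NoiseCube_sign_patterns:
  assumes "0 \<le> \<epsilon>" "\<epsilon> \<le> 1" and x: "x \<in> sign_patterns N" and y: "y \<in> sign_patterns N"
  shows "measure (NoiseCube \<epsilon>) (cylinder {..<N} (\<lambda>i. (x i, y i))) = (\<Prod>i<N. (1 + (1 - \<epsilon>) * x i * y i) / 4)"
  using sign_patternsD[OF x] sign_patternsD[OF y]
  by (simp add: measure_NoiseCube_cylinder pmf_noise_pmf[OF assms(1,2)])

lemma integral_noise_prefix_avg:
  assumes "0 \<le> \<epsilon>" "\<epsilon> \<le> 1"
  shows "(\<integral>p. prefix_avg f N (\<lambda>i. fst (p i)) * prefix_avg f N (\<lambda>i. snd (p i)) \<partial>NoiseCube \<epsilon>)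
    = (\<Sum>x\<in>sign_patterns N. \<Sum>y\<in>sign_patterns N.
        cylinder_avg f N x * cylinder_avg f N y * (\<Prod>i<N. (1 + (1 - \<epsilon>) * x i * y i) / 4))"
proof -
  interpret noise: prob_space "NoiseCube \<epsilon>"
    by (rule prob_space_NoiseCube)
  let ?C = "\<lambda>x y. cylinder {..<N} (\<lambda>i. (x i, y i))"
  have int: "integrable (NoiseCube \<epsilon>) (\<lambda>p. cylinder_avg f N x * cylinder_avg f N y * indicator (?C x y) p)"
    for x y
    by (intro integrable_mult_right integrable_real_indicator sets_NoiseCube_cylinder)
      (simp_all add: less_top[symmetric] noise.emeasure_finite)
  have "(\<integral>p. prefix_avg f N (\<lambda>i. fst (p i)) * prefix_avg f N (\<lambda>i. snd (p i)) \<partial>NoiseCube \<epsilon>)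
      = (\<integral>p. (\<Sum>x\<in>sign_patterns N. \<Sum>y\<in>sign_patterns N.
          cylinder_avg f N x * cylinder_avg f N y * indicator (?C x y) p) \<partial>NoiseCube \<epsilon>)"
    unfolding prefix_avg_def sum_product
    by (intro Bochner_Integration.integral_cong refl sum.cong)
      (simp add: indicator_cylinder_pair[symmetric] algebra_simps)
  also have "\<dots> = (\<Sum>x\<in>sign_patterns N. \<integral>p. (\<Sum>y\<in>sign_patterns N.
      cylinder_avg f N x * cylinder_avg f N y * indicator (?C x y) p) \<partial>NoiseCube \<epsilon>)"
    by (rule Bochner_Integration.integral_sum) (intro Bochner_Integration.integrable_sum int)
  also have "\<dots> = (\<Sum>x\<in>sign_patterns N. \<Sum>y\<in>sign_patterns N.
      \<integral>p. cylinder_avg f N x * cylinder_avg f N y * indicator (?C x y) p \<partial>NoiseCube \<epsilon>)"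
    by (intro sum.cong refl Bochner_Integration.integral_sum int)
  also have "\<dots> = (\<Sum>x\<in>sign_patterns N. \<Sum>y\<in>sign_patterns N.
      cylinder_avg f N x * cylinder_avg f N y * measure (NoiseCube \<epsilon>) (?C x y))"
    by (intro sum.cong refl) simp
  also have "\<dots> = (\<Sum>x\<in>sign_patterns N. \<Sum>y\<in>sign_patterns N.
      cylinder_avg f N x * cylinder_avg f N y * (\<Prod>i<N. (1 + (1 - \<epsilon>) * x i * y i) / 4))"
    by (intro sum.cong refl) (simp add: measure_NoiseCube_sign_patterns[OF assms])
  finally show ?thesis .
qed

text \<open>
  Expanding \<open>\<Prod>\<^sub>i<N (1 + r x\<^sub>i y\<^sub>i)\<close> over the subsets of \<open>{..<N}\<close> diagonalises the noise
  kernel in the Walsh basis.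
\<close>

lemma sum_sign_patterns_noise_kernel:
  fixes c :: "(nat \<Rightarrow> real) \<Rightarrow> real" and r :: real
  shows "(\<Sum>x\<in>sign_patterns N. \<Sum>y\<in>sign_patterns N. c x * c y * (\<Prod>i<N. (1 + r * x i * y i) / 4))
    = (\<Sum>S\<in>Pow {..<N}. r ^ card S * (\<Sum>x\<in>sign_patterns N. (1/2) ^ N * c x * walsh S x) ^ 2)"
proof -
  have expand: "(\<Prod>i<N. (1 + r * x i * y i) / 4)
      = (\<Sum>S\<in>Pow {..<N}. r ^ card S * ((1/2) ^ N * walsh S x) * ((1/2) ^ N * walsh S y))"
    if "x \<in> sign_patterns N" "y \<in> sign_patterns N" for x y
  proof -
    have "(\<Prod>i<N. (1 + r * x i * y i) / 4) = (1/4) ^ N * (\<Prod>i<N. r * x i * y i + 1)"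
      by (simp add: prod_dividef power_one_over algebra_simps)
    also have "(\<Prod>i<N. r * x i * y i + 1) = (\<Sum>S\<in>Pow {..<N}. (\<Prod>i\<in>S. r * x i * y i))"
      by (subst prod_add) simp_all
    also have "\<dots> = (\<Sum>S\<in>Pow {..<N}. r ^ card S * (walsh S x * walsh S y))"
      using that sign_patternsD
      by (intro sum.cong refl) (auto simp: prod.distrib walsh_eq_prod subset_eq)
    finally show ?thesis
      by (simp add: sum_distrib_left power_mult_distrib[symmetric] algebra_simps)
  qed
  let ?a = "\<lambda>S x. (1/2) ^ N * c x * walsh S x"
  have "(\<Sum>x\<in>sign_patterns N. \<Sum>y\<in>sign_patterns N. c x * c y * (\<Prod>i<N. (1 + r * x i * y i) / 4))
      = (\<Sum>x\<in>sign_patterns N. \<Sum>y\<in>sign_patterns N. \<Sum>S\<in>Pow {..<N}. r ^ card S * (?a S x * ?a S y))"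
  proof (intro sum.cong refl)
    fix x y assume "x \<in> sign_patterns N" "y \<in> sign_patterns N"
    then show "c x * c y * (\<Prod>i<N. (1 + r * x i * y i) / 4)
        = (\<Sum>S\<in>Pow {..<N}. r ^ card S * (?a S x * ?a S y))"
      unfolding expand[OF \<open>x \<in> sign_patterns N\<close> \<open>y \<in> sign_patterns N\<close>]
      by (simp add: sum_distrib_left mult_ac)
  qed
  also have "\<dots> = (\<Sum>S\<in>Pow {..<N}. \<Sum>x\<in>sign_patterns N. \<Sum>y\<in>sign_patterns N. r ^ card S * (?a S x * ?a S y))"
    by (subst sum.swap) (intro sum.cong refl sum.swap)
  also have "\<dots> = (\<Sum>S\<in>Pow {..<N}. r ^ card S * (\<Sum>x\<in>sign_patterns N. ?a S x) ^ 2)"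
    unfolding power2_eq_square sum_product by (simp only: sum_distrib_left)
  finally show ?thesis .
qed

lemma noise_cov_prefix_avg:
  assumes f: "boolean_fun f" and "0 \<le> \<epsilon>" "\<epsilon> \<le> 1"
  shows "(\<integral>p. prefix_avg f N (\<lambda>i. fst (p i)) * prefix_avg f N (\<lambda>i. snd (p i)) \<partial>NoiseCube \<epsilon>)
      - (\<integral>\<omega>. f \<omega> \<partial>Cube) ^ 2
    = (\<Sum>S\<in>Pow {..<N} - {{}}. (1 - \<epsilon>) ^ card S * walsh_coeff f S ^ 2)"
proof -
  have "(\<integral>p. prefix_avg f N (\<lambda>i. fst (p i)) * prefix_avg f N (\<lambda>i. snd (p i)) \<partial>NoiseCube \<epsilon>)
      = (\<Sum>S\<in>Pow {..<N}. (1 - \<epsilon>) ^ card S * walsh_coeff f S ^ 2)"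
    unfolding integral_noise_prefix_avg[OF assms(2,3)] sum_sign_patterns_noise_kernel
    using walsh_coeff_eq_sum_sign_patterns[OF boolean_funD[OF f]] by simp
  also have "\<dots> = walsh_coeff f {} ^ 2 + (\<Sum>S\<in>Pow {..<N} - {{}}. (1 - \<epsilon>) ^ card S * walsh_coeff f S ^ 2)"
    by (subst sum.remove[of _ "{}"]) auto
  finally show ?thesis
    by (simp add: walsh_coeff_def walsh_def)
qed

lemma tendsto_noise_corr_prefix_avg:
  assumes f: "boolean_fun f" and fin: "finitary f"
  shows "(\<lambda>N. \<integral>p. prefix_avg f N (\<lambda>i. fst (p i)) * prefix_avg f N (\<lambda>i. snd (p i)) \<partial>NoiseCube \<epsilon>)
    \<longlonglongrightarrow> noise_corr f \<epsilon>"
  unfolding noise_corr_def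
proof (rule integral_dominated_convergence[where w="\<lambda>_. 1"])
  note f_meas = boolean_funD(1)[OF f] and f_bound = boolean_funD(2)[OF f]
  interpret noise: prob_space "NoiseCube \<epsilon>"
    by (rule prob_space_NoiseCube)
  have [measurable]: "(\<lambda>p. g (\<lambda>i. h (p i))) \<in> borel_measurable (NoiseCube \<epsilon>)"
    if "g \<in> borel_measurable Cube" for g and h :: "real \<times> real \<Rightarrow> real"
    using measurable_compose[OF measurable_NoiseCube_coords that] .
  show "(\<lambda>p. f (\<lambda>i. fst (p i)) * f (\<lambda>i. snd (p i))) \<in> borel_measurable (NoiseCube \<epsilon>)"
    "(\<lambda>p. prefix_avg f N (\<lambda>i. fst (p i)) * prefix_avg f N (\<lambda>i. snd (p i))) \<in> borel_measurable (NoiseCube \<epsilon>)"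
    for N
    using f_meas by measurable
  show "integrable (NoiseCube \<epsilon>) (\<lambda>_. 1::real)"
    by simp
  show "AE p in NoiseCube \<epsilon>. norm (prefix_avg f N (\<lambda>i. fst (p i)) * prefix_avg f N (\<lambda>i. snd (p i))) \<le> 1" for N
    using abs_prefix_avg_le[OF f_meas f_bound] by (simp add: abs_mult mult_le_one)
  have "AE p in NoiseCube \<epsilon>. eventually (\<lambda>N. prefix_avg f N (\<lambda>i. fst (p i)) = f (\<lambda>i. fst (p i))) sequentially"
    "AE p in NoiseCube \<epsilon>. eventually (\<lambda>N. prefix_avg f N (\<lambda>i. snd (p i)) = f (\<lambda>i. snd (p i))) sequentially"
    by (rule AE_NoiseCube_coords[OF map_fst_noise_pmf AE_eventually_prefix_avg_eq[OF f_meas fin]],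
        rule AE_NoiseCube_coords[OF map_snd_noise_pmf AE_eventually_prefix_avg_eq[OF f_meas fin]])
  then show "AE p in NoiseCube \<epsilon>.
      (\<lambda>N. prefix_avg f N (\<lambda>i. fst (p i)) * prefix_avg f N (\<lambda>i. snd (p i)))
      \<longlonglongrightarrow> f (\<lambda>i. fst (p i)) * f (\<lambda>i. snd (p i))"
  proof eventually_elim
    case (elim p)
    then have "eventually (\<lambda>N. prefix_avg f N (\<lambda>i. fst (p i)) * prefix_avg f N (\<lambda>i. snd (p i))
        = f (\<lambda>i. fst (p i)) * f (\<lambda>i. snd (p i))) sequentially"
      by eventually_elim simp
    then show ?case
      by (rule tendsto_eventually)
  qed
qed

lemma sum_of_nat_mult_power_le:
  fixes r :: real
  assumes "0 \<le> r" "r < 1"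
  shows "(\<Sum>k<n. real k * r ^ k) \<le> r / (1 - r) ^ 2"
proof -
  have closed_form: "(1 - r) ^ 2 * (\<Sum>k<n. real k * r ^ k) = r - real n * r ^ n + (real n - 1) * r ^ (n + 1)"
    by (induction n) (simp_all add: power2_eq_square algebra_simps)
  have "(real n - 1) * r \<le> real n"
    using assms by (cases "n = 0") (auto intro: order_trans[OF mult_left_le])
  then have "((real n - 1) * r) * r ^ n \<le> real n * r ^ n"
    using assms by (intro mult_right_mono) simp_all
  then have "(real n - 1) * r ^ (n + 1) \<le> real n * r ^ n"
    by (simp add: algebra_simps)
  then have "(1 - r) ^ 2 * (\<Sum>k<n. real k * r ^ k) \<le> r"
    by (simp add: closed_form)
  then show ?thesis
    using assms by (simp add: field_simps)
qed

text \<open>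
  Grouping the noise covariance by the level \<open>k = card S\<close>, each level contributes at most
  \<open>r\<^sup>k * k * revealment f\<close>.
\<close>

lemma sum_walsh_levels_le_revealment:
  assumes f: "boolean_fun f" "finitary f" and r: "0 \<le> r" "r < 1"
  shows "(\<Sum>S\<in>Pow {..<N} - {{}}. r ^ card S * walsh_coeff f S ^ 2) \<le> r / (1 - r) ^ 2 * revealment f"
proof -
  define A where "A = Pow {..<N} - {{}}"
  have "(\<Sum>S\<in>A. r ^ card S * walsh_coeff f S ^ 2)
      = (\<Sum>k\<in>card ` A. \<Sum>S\<in>{S\<in>A. card S = k}. r ^ card S * walsh_coeff f S ^ 2)"
    by (rule sum.image_gen) (simp add: A_def)
  also have "\<dots> = (\<Sum>k\<in>card ` A. r ^ k * (\<Sum>S\<in>{S\<in>A. card S = k}. walsh_coeff f S ^ 2))"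
    by (intro sum.cong refl) (simp add: sum_distrib_left)
  also have "\<dots> \<le> (\<Sum>k\<in>card ` A. r ^ k * (real k * revealment f))"
  proof (intro sum_mono mult_left_mono)
    fix k assume "k \<in> card ` A"
    then obtain S where "S \<subseteq> {..<N}" "S \<noteq> {}" "k = card S"
      by (auto simp: A_def)
    then have "k > 0"
      using finite_subset[of S "{..<N}"] by (simp add: card_gt_0_iff)
    moreover have "finite S" if "S \<in> {S\<in>A. card S = k}" for S
      using that finite_subset[of S "{..<N}"] by (simp add: A_def)
    ultimately show "(\<Sum>S\<in>{S\<in>A. card S = k}. walsh_coeff f S ^ 2) \<le> real k * revealment f"
      by (intro sum_walsh_coeff_square_le_revealment[OF f]) (simp_all add: A_def)
  qed (use r in simp)
  also have "\<dots> \<le> (\<Sum>k<N+1. r ^ k * (real k * revealment f))"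
  proof (rule sum_mono2)
    show "card ` A \<subseteq> {..<N+1}"
    proof
      fix k assume "k \<in> card ` A"
      then obtain S where "S \<subseteq> {..<N}" "k = card S"
        by (auto simp: A_def)
      then show "k \<in> {..<N+1}"
        using card_mono[of "{..<N}" S] by simp
    qed
  qed (use r revealment_nonneg[OF f] in auto)
  also have "\<dots> = revealment f * (\<Sum>k<N+1. real k * r ^ k)"
    by (simp add: sum_distrib_left algebra_simps)
  also have "\<dots> \<le> revealment f * (r / (1 - r) ^ 2)"
    by (intro mult_left_mono sum_of_nat_mult_power_le r revealment_nonneg[OF f])
  finally show ?thesis
    by (simp add: A_def mult.commute)
qed

lemma noise_cov_bounds:
  assumes f: "boolean_fun f" "finitary f" and \<epsilon>: "0 < \<epsilon>" "\<epsilon> \<le> 1"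
  shows "0 \<le> noise_corr f \<epsilon> - (\<integral>\<omega>. f \<omega> \<partial>Cube) ^ 2"
    and "noise_corr f \<epsilon> - (\<integral>\<omega>. f \<omega> \<partial>Cube) ^ 2 \<le> (1 - \<epsilon>) / \<epsilon> ^ 2 * revealment f"
proof -
  define c where "c N = (\<Sum>S\<in>Pow {..<N} - {{}}. (1 - \<epsilon>) ^ card S * walsh_coeff f S ^ 2)" for N
  have "(\<lambda>N. (\<integral>p. prefix_avg f N (\<lambda>i. fst (p i)) * prefix_avg f N (\<lambda>i. snd (p i)) \<partial>NoiseCube \<epsilon>)
      - (\<integral>\<omega>. f \<omega> \<partial>Cube) ^ 2) \<longlonglongrightarrow> noise_corr f \<epsilon> - (\<integral>\<omega>. f \<omega> \<partial>Cube) ^ 2"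
    by (intro tendsto_diff tendsto_noise_corr_prefix_avg[OF f] tendsto_const)
  then have lim: "c \<longlonglongrightarrow> noise_corr f \<epsilon> - (\<integral>\<omega>. f \<omega> \<partial>Cube) ^ 2"
    using \<epsilon> by (simp add: noise_cov_prefix_avg[OF f(1)] c_def[abs_def])
  show "0 \<le> noise_corr f \<epsilon> - (\<integral>\<omega>. f \<omega> \<partial>Cube) ^ 2"
    using \<epsilon> by (intro LIMSEQ_le_const[OF lim]) (auto simp: c_def intro!: sum_nonneg)
  have "c N \<le> (1 - \<epsilon>) / \<epsilon> ^ 2 * revealment f" for N
    using sum_walsh_levels_le_revealment[OF f, of "1 - \<epsilon>" N] \<epsilon> by (simp add: c_def)
  then show "noise_corr f \<epsilon> - (\<integral>\<omega>. f \<omega> \<partial>Cube) ^ 2 \<le> (1 - \<epsilon>) / \<epsilon> ^ 2 * revealment f"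
    by (intro LIMSEQ_le_const2[OF lim]) simp
qed

theorem mainTheorem20:
  fixes f :: "nat \<Rightarrow> (nat \<Rightarrow> real) \<Rightarrow> real"
  assumes "\<And>n. boolean_fun (f n)"
    and "\<And>n. finitary (f n)"
    and "(\<lambda>n. revealment (f n)) \<longlonglongrightarrow> 0"
  shows "noise_sensitive f"
  unfolding noise_sensitive_def
proof
  fix \<epsilon> :: real assume "\<epsilon> \<in> {0<..1}"
  then have \<epsilon>: "0 < \<epsilon>" "\<epsilon> \<le> 1"
    by auto
  note bounds = noise_cov_bounds[OF assms(1,2) \<epsilon>]
  show "(\<lambda>n. noise_corr (f n) \<epsilon> - (\<integral>\<omega>. f n \<omega> \<partial>Cube) ^ 2) \<longlonglongrightarrow> 0"
  proof (rule tendsto_sandwich[where f="\<lambda>_. 0" and h="\<lambda>n. (1 - \<epsilon>) / \<epsilon> ^ 2 * revealment (f n)"])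
    show "\<forall>\<^sub>F n in sequentially. 0 \<le> noise_corr (f n) \<epsilon> - (\<integral>\<omega>. f n \<omega> \<partial>Cube) ^ 2"
      using bounds(1) by simp
    show "\<forall>\<^sub>F n in sequentially.
        noise_corr (f n) \<epsilon> - (\<integral>\<omega>. f n \<omega> \<partial>Cube) ^ 2 \<le> (1 - \<epsilon>) / \<epsilon> ^ 2 * revealment (f n)"
      using bounds(2) by simp
    show "(\<lambda>n. (1 - \<epsilon>) / \<epsilon> ^ 2 * revealment (f n)) \<longlonglongrightarrow> 0"
      by (rule tendsto_mult_right_zero[OF assms(3)])
  qed simp
qed

end
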